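(* For every real number $\kappa$ there exists a three-dimensional, regular, bipartite lattice $L$ (in the sense defined in the context) containing no cycle of length $6$ (i.e. $C_6(L)=0$) and containing at least one cycle of length $4$, such that $$\frac{\bar\theta_{2,2,2}(L)}{\bar C_4(L)} > \kappa .$$ Moreover, $L$ can be realized as follows: its vertices are points of $\mathbb{R}^3$ and its edges are straight line segments joining them, two edges meeting at most in a common endpoint; $L$ is invariant under translation by an integer in each of the three coordinate directions; every vertex lies in the interior of one of the unit cubes with integer-coordinate vertices tessellating $\mathbb{R}^3$, each such cube containing finitely many vertices; and every edge either lies in the interior of one such cube or joins vertices lying in two nearest-neighbour cubes.
   Context: A connected infinite graph $G$ is called a lattice if there is a finitely generated abelian group $\Gamma$ of automorphisms of $G$ (called translations) such that the set of orbits of vertices under $\Gamma$ is finite; it is $i$-dimensional if exactly $i$ elements of a generating set of $\Gamma$ have infinite order (here $\Gamma\cong\mathbb{Z}^3$ acting by integer translations). The lattice is regular if all vertices have the same degree $d$, and bipartite if its graph is bipartite. Let $G_1$ be the $4$-cycle and let $G_2$ be the theta graph $\theta_{2,2,2}$: two vertices $u,w$ joined by three internally disjoint paths of length $2$ (5 vertices, 6 edges). For a graph $H$, $C_k(H)$ denotes the number of subgraphs of $H$ isomorphic to the cycle of length $k$, and $\theta_{2,2,2}(H)$ the number of subgraphs isomorphic to $G_2$. For a lattice these counts are infinite, so one uses per-vertex densities: choosing a finite set $R$ of representatives of the vertex orbits, $\bar C_4(L)$ is the average over $v\in R$ of $\tfrac14$ times the number of $4$-cycles of $L$ containing $v$,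 and $\bar\theta_{2,2,2}(L)$ is the average over $v\in R$ of $\tfrac15$ times the number of copies of $G_2$ in $L$ containing $v$; equivalently, the ratio $\bar\theta_{2,2,2}/\bar C_4$ is the limit of $\theta_{2,2,2}(H_n)/C_4(H_n)$ along any sequence of finite graphs $H_n$ converging to $L$ in the Benjamini–Schramm sense. *)

theory Defs
  imports "HOL-Analysis.Analysis"
begin

definition simple_graph :: "'a set \<Rightarrow> ('a \<Rightarrow> 'a \<Rightarrow> bool) \<Rightarrow> bool" where
  "simple_graph V E \<longleftrightarrow> (\<forall>x y. E x y \<longrightarrow> x \<in> V \<and> y \<in> V \<and> x \<noteq> y \<and> E y x)"

definition connected_graph :: "'a set \<Rightarrow> ('a \<Rightarrow> 'a \<Rightarrow> bool) \<Rightarrow> bool" where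
  "connected_graph V E \<longleftrightarrow> (\<forall>x\<in>V. \<forall>y\<in>V. E\<^sup>*\<^sup>* x y)"

definition regular_graph :: "'a set \<Rightarrow> ('a \<Rightarrow> 'a \<Rightarrow> bool) \<Rightarrow> bool" where
  "regular_graph V E \<longleftrightarrow>
     (\<exists>d::nat. \<forall>v\<in>V. finite {w. E v w} \<and> card {w. E v w} = d)"

definition bipartite_graph :: "'a set \<Rightarrow> ('a \<Rightarrow> 'a \<Rightarrow> bool) \<Rightarrow> bool" where
  "bipartite_graph V E \<longleftrightarrow> (\<exists>A. \<forall>x y. E x y \<longrightarrow> (x \<in> A \<longleftrightarrow> y \<notin> A))"

definition cycle_subgraphs :: "('a \<Rightarrow> 'a \<Rightarrow> bool) \<Rightarrow> nat \<Rightarrow> 'a set set set" where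
  "cycle_subgraphs E k =
     {{{x i, x ((i + 1) mod k)} | i. i < k} | x.
        inj_on x {..<k} \<and> (\<forall>i<k. E (x i) (x ((i + 1) mod k)))}"

text \<open>Subgraphs isomorphic to theta_{2,2,2}: vertices u, w joined by three
internally disjoint paths u-a-w, u-b-w, u-c-w; identified with their edge sets.\<close>
definition theta222_subgraphs :: "('a \<Rightarrow> 'a \<Rightarrow> bool) \<Rightarrow> 'a set set set" where
  "theta222_subgraphs E =
     {{{u, a}, {a, w}, {u, b}, {b, w}, {u, c}, {c, w}} | u w a b c.
        distinct [u, w, a, b, c] \<and>
        E u a \<and> E a w \<and> E u b \<and> E b w \<and> E u c \<and> E c w}"

definition copies_at :: "'a set set set \<Rightarrow> 'a \<Rightarrow> nat" where
  "copies_at S v = card {H \<in> S. v \<in> \<Union>H}"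

definition cube_of :: "real^3 \<Rightarrow> int^3" where
  "cube_of x = (\<chi> i. \<lfloor>x $ i\<rfloor>)"

definition integer_vector :: "real^3 \<Rightarrow> bool" where
  "integer_vector t \<longleftrightarrow> (\<forall>i. t $ i \<in> \<int>)"

text \<open>Set of representatives of the vertex orbits under integer translations:
the vertices lying in the cube [0,1)^3.\<close>
definition reps :: "(real^3) set \<Rightarrow> (real^3) set" where
  "reps V = {v \<in> V. cube_of v = 0}"

definition C4_bar :: "(real^3) set \<Rightarrow> (real^3 \<Rightarrow> real^3 \<Rightarrow> bool) \<Rightarrow> real" where
  "C4_bar V E = (\<Sum>v\<in>reps V. real (copies_at (cycle_subgraphs E 4) v) / 4) / real (card (reps V))"

definition theta222_bar :: "(real^3) set \<Rightarrow> (real^3 \<Rightarrow> real^3 \<Rightarrow> bool) \<Rightarrow> real" where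
  "theta222_bar V E = (\<Sum>v\<in>reps V. real (copies_at (theta222_subgraphs E) v) / 5) / real (card (reps V))"

definition cubic_lattice :: "(real^3) set \<Rightarrow> (real^3 \<Rightarrow> real^3 \<Rightarrow> bool) \<Rightarrow> bool" where
  "cubic_lattice V E \<longleftrightarrow>
     simple_graph V E \<and> connected_graph V E \<and> infinite V \<and>
     (\<forall>a b c d. E a b \<and> E c d \<and> {a, b} \<noteq> {c, d} \<longrightarrow>
        closed_segment a b \<inter> closed_segment c d \<subseteq> {a, b} \<inter> {c, d}) \<and>
     (\<forall>t. integer_vector t \<longrightarrow>
        (\<forall>x. x \<in> V \<longleftrightarrow> x + t \<in> V) \<and> (\<forall>x y. E x y \<longleftrightarrow> E (x + t) (y + t))) \<and>
     (\<forall>v\<in>V. \<forall>i. v $ i \<notin> \<int>) \<and>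
     (\<forall>z::int^3. finite {v \<in> V. cube_of v = z}) \<and>
     (\<forall>x y. E x y \<longrightarrow> cube_of x = cube_of y \<or>
        (\<exists>i. \<bar>cube_of x $ i - cube_of y $ i\<bar> = 1 \<and>
             (\<forall>j. j \<noteq> i \<longrightarrow> cube_of x $ j = cube_of y $ j)))"

end

theory Submission
  imports Defs
begin

(* The lattice is built from the incidence graph of the points and the coordinate lines of the
   Hamming space [m]^(2m), every point being doubled into two twins. Two points lie on at most
   one common line, and three pairwise collinear points lie on a single line; hence the only
   4-cycles consist of two twins and two lines through them, and there are no 6-cycles. All
   degrees are 2m. Each 4-cycle extends to a theta graph by any of the other 2m - 2 lines through
   its twins, while a theta graph contains at most three 4-cycles, so double counting gives
   (2m - 2) C4 <= 3 theta at every vertex, i.e. theta222_bar / C4_bar >= 4 (2m - 2) / 15.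

   A copy of the incidence graph is put into every integer unit cube, except that the zero word of
   each cube is joined to the lines through it in the first three directions of the neighbouring
   cubes instead of its own, which connects the copies. Points are drawn at x-sites
   (1/2 + s, 1/2 - s, 1/2) and lines at y-sites (1/3, 1/3 + t, 1/3 - t) with injectively coded
   small parameters s, t. The coordinate sums of the sites are 1/2 and 0 modulo 1; together with
   the smallness of s and t this keeps two straight edges from meeting except at a common
   endpoint. *)

section \<open>Four-cycles and theta graphs\<close>

definition cycle4_edges :: "'a \<Rightarrow> 'a \<Rightarrow> 'a \<Rightarrow> 'a \<Rightarrow> 'a set set" where
  "cycle4_edges a b c d = {{a, b}, {b, c}, {c, d}, {d, a}}"

definition theta222_edges :: "'a \<Rightarrow> 'a \<Rightarrow> 'a \<Rightarrow> 'a \<Rightarrow> 'a \<Rightarrow> 'a set set" where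
  "theta222_edges u w a b c = {{u, a}, {a, w}, {u, b}, {b, w}, {u, c}, {c, w}}"

lemma cycle4_edges_rotate: "cycle4_edges a b c d = cycle4_edges b c d a"
  by (auto simp: cycle4_edges_def)

lemma cycle4_edges_reflect: "cycle4_edges a b c d = cycle4_edges a d c b"
  by (auto simp: cycle4_edges_def)

lemma Union_cycle4_edges: "\<Union>(cycle4_edges a b c d) = {a, b, c, d}"
  by (auto simp: cycle4_edges_def)

lemma Union_theta222_edges: "\<Union>(theta222_edges u w a b c) = {u, w, a, b, c}"
  by (auto simp: theta222_edges_def)

lemma inj_on_lessThan_iff_distinct: "inj_on x {..<n} \<longleftrightarrow> distinct (map x [0..<n])"
  by (simp add: distinct_map atLeast_upt)

lemma cycle_subgraphs_4_iff:
  "H \<in> cycle_subgraphs E 4 \<longleftrightarrow>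
     (\<exists>a b c d. distinct [a, b, c, d] \<and> E a b \<and> E b c \<and> E c d \<and> E d a \<and> H = cycle4_edges a b c d)"
proof -
  have idx: "{..<4::nat} = {0, 1, 2, 3}" "[0..<4] = [0, 1, 2, 3::nat]"
    by (auto simp: eval_nat_numeral upt_rec)
  have succ: "(0 + 1) mod 4 = (1::nat)" "(1 + 1) mod 4 = (2::nat)" "(2 + 1) mod 4 = (3::nat)"
    "(3 + 1) mod 4 = (0::nat)"
    by simp_all
  have edges: "{{x i, x ((i + 1) mod 4)} | i. i < 4} = cycle4_edges (x 0) (x 1) (x 2) (x 3)"
    and adjacent: "(\<forall>i<4. E (x i) (x ((i + 1) mod 4))) \<longleftrightarrow>
       E (x 0) (x 1) \<and> E (x 1) (x 2) \<and> E (x 2) (x 3) \<and> E (x 3) (x 0)" for x :: "nat \<Rightarrow> _"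
  proof -
    have "{{x i, x ((i + 1) mod 4)} | i. i < 4} = (\<lambda>i. {x i, x ((i + 1) mod 4)}) ` {0, 1, 2, 3}"
      unfolding idx(1)[symmetric] by auto
    then show "{{x i, x ((i + 1) mod 4)} | i. i < 4} = cycle4_edges (x 0) (x 1) (x 2) (x 3)"
      unfolding cycle4_edges_def by (simp only: image_insert image_empty succ)
    show "(\<forall>i<4. E (x i) (x ((i + 1) mod 4))) \<longleftrightarrow>
       E (x 0) (x 1) \<and> E (x 1) (x 2) \<and> E (x 2) (x 3) \<and> E (x 3) (x 0)"
      unfolding lessThan_iff[symmetric] idx(1) by (simp only: Ball_def[symmetric] ball_simps succ simp_thms)
  qed
  have "H \<in> cycle_subgraphs E 4 \<longleftrightarrow> (\<exists>x :: nat \<Rightarrow> _. distinct [x 0, x 1, x 2, x 3] \<and>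
          E (x 0) (x 1) \<and> E (x 1) (x 2) \<and> E (x 2) (x 3) \<and> E (x 3) (x 0) \<and>
          H = cycle4_edges (x 0) (x 1) (x 2) (x 3))"
    unfolding cycle_subgraphs_def mem_Collect_eq inj_on_lessThan_iff_distinct idx(2) edges adjacent
    by (simp only: list.map) blast
  also have "\<dots> \<longleftrightarrow> (\<exists>a b c d. distinct [a, b, c, d] \<and> E a b \<and> E b c \<and> E c d \<and> E d a \<and>
      H = cycle4_edges a b c d)"
  proof
    assume "\<exists>a b c d. distinct [a, b, c, d] \<and> E a b \<and> E b c \<and> E c d \<and> E d a \<and>
      H = cycle4_edges a b c d"
    then obtain a b c d where "distinct [a, b, c, d] \<and> E a b \<and> E b c \<and> E c d \<and> E d a \<and>
      H = cycle4_edges a b c d" by blast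
    then show "\<exists>x :: nat \<Rightarrow> _. distinct [x 0, x 1, x 2, x 3] \<and>
          E (x 0) (x 1) \<and> E (x 1) (x 2) \<and> E (x 2) (x 3) \<and> E (x 3) (x 0) \<and>
          H = cycle4_edges (x 0) (x 1) (x 2) (x 3)"
      by (intro exI[of _ "nth [a, b, c, d]"]) simp
  qed blast
  finally show ?thesis .
qed

lemma cycle_subgraphs_6E:
  assumes "H \<in> cycle_subgraphs E 6"
  obtains a b c d e f where "distinct [a, b, c, d, e, f]"
    "E a b" "E b c" "E c d" "E d e" "E e f" "E f a"
proof -
  have upt6: "[0..<6] = [0, 1, 2, 3, 4, 5::nat]"
    by (simp add: eval_nat_numeral upt_rec)
  from assms obtain x where x: "distinct (map x [0..<6])" "\<And>i. i < 6 \<Longrightarrow> E (x i) (x ((i + 1) mod 6))"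
    unfolding cycle_subgraphs_def inj_on_lessThan_iff_distinct by auto
  have step: "E (x i) (x j)" if "i < 6" "(i + 1) mod 6 = j" for i j
    using x(2)[OF that(1)] that(2) by simp
  have "E (x 0) (x 1)" "E (x 1) (x 2)" "E (x 2) (x 3)" "E (x 3) (x 4)" "E (x 4) (x 5)" "E (x 5) (x 0)"
    by (rule step; simp)+
  moreover have "distinct [x 0, x 1, x 2, x 3, x 4, x 5]"
    using x(1) unfolding upt6 by (simp only: list.map)
  ultimately show thesis
    using that by blast
qed

lemma theta222_edges_sides:
  assumes "{p, q} \<in> theta222_edges u w a b c"
  shows "(p \<in> {u, w} \<and> q \<in> {a, b, c}) \<or> (p \<in> {a, b, c} \<and> q \<in> {u, w})"
  using assms by (auto simp: theta222_edges_def doubleton_eq_iff)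

lemma cycle4_across_theta222_sides:
  assumes "{p, r} = {u, w}" "q \<in> {a, b, c}" "s \<in> {a, b, c}" "q \<noteq> s"
  shows "cycle4_edges p q r s \<in> {cycle4_edges u a w b, cycle4_edges u a w c, cycle4_edges u b w c}"
proof -
  have "cycle4_edges p q r s = cycle4_edges u q w s"
    using assms(1) cycle4_edges_rotate[of u s w q] cycle4_edges_rotate[of s w q u]
      cycle4_edges_reflect[of u s w q]
    by (auto simp: doubleton_eq_iff)
  moreover have "(q, s) \<in> {(a, b), (b, a), (a, c), (c, a), (b, c), (c, b)}"
    using assms(2-4) by auto
  ultimately show ?thesis
    using cycle4_edges_reflect[of u b w a] cycle4_edges_reflect[of u c w a]
      cycle4_edges_reflect[of u c w b]
    by auto
qed

lemma cycle4_subgraphs_within_theta222: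
  assumes "T \<in> theta222_subgraphs E"
  obtains u w a b c where
    "{C \<in> cycle_subgraphs E 4. C \<subseteq> T} \<subseteq> {cycle4_edges u a w b, cycle4_edges u a w c, cycle4_edges u b w c}"
proof -
  obtain u w a b c where T: "T = theta222_edges u w a b c" "distinct [u, w, a, b, c]"
    using assms unfolding theta222_subgraphs_def theta222_edges_def by blast
  have "C \<in> {cycle4_edges u a w b, cycle4_edges u a w c, cycle4_edges u b w c}"
    if cycle: "C \<in> cycle_subgraphs E 4" and sub: "C \<subseteq> T" for C
  proof -
    obtain p q r s where C: "C = cycle4_edges p q r s" "distinct [p, q, r, s]"
      using cycle unfolding cycle_subgraphs_4_iff by blast
    have edges: "{p, q} \<in> T" "{q, r} \<in> T" "{r, s} \<in> T"
      using sub C(1) by (auto simp: cycle4_edges_def)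
    have sides: "(p \<in> {u, w} \<and> q \<in> {a, b, c}) \<or> (p \<in> {a, b, c} \<and> q \<in> {u, w})"
      "(q \<in> {u, w} \<and> r \<in> {a, b, c}) \<or> (q \<in> {a, b, c} \<and> r \<in> {u, w})"
      "(r \<in> {u, w} \<and> s \<in> {a, b, c}) \<or> (r \<in> {a, b, c} \<and> s \<in> {u, w})"
      by (rule theta222_edges_sides; use edges in \<open>simp add: T(1)\<close>)+
    have uw: "{u, w} \<inter> {a, b, c} = {}"
      using T(2) by auto
    show ?thesis
    proof (cases "p \<in> {u, w}")
      case True
      then have "{p, r} = {u, w}" "q \<in> {a, b, c}" "s \<in> {a, b, c}"
        using sides uw C(2) by auto
      then show ?thesis
        unfolding C(1) using C(2) by (intro cycle4_across_theta222_sides) auto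
    next
      case False
      then have "{q, s} = {u, w}" "r \<in> {a, b, c}" "p \<in> {a, b, c}"
        using sides uw C(2) by auto
      then have "cycle4_edges q r s p \<in> {cycle4_edges u a w b, cycle4_edges u a w c, cycle4_edges u b w c}"
        using C(2) by (intro cycle4_across_theta222_sides) auto
      then show ?thesis
        unfolding C(1) cycle4_edges_rotate[of p] .
    qed
  qed
  then show thesis
    using that by blast
qed

lemma card_cycle4_subgraphs_within_theta222_le:
  assumes "T \<in> theta222_subgraphs E" "S \<subseteq> cycle_subgraphs E 4"
  shows "card {C \<in> S. C \<subseteq> T} \<le> 3"
proof -
  obtain u w a b c where
    "{C \<in> cycle_subgraphs E 4. C \<subseteq> T} \<subseteq> {cycle4_edges u a w b, cycle4_edges u a w c, cycle4_edges u b w c}"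
    using assms(1) by (rule cycle4_subgraphs_within_theta222)
  then have "card {C \<in> S. C \<subseteq> T} \<le> card {cycle4_edges u a w b, cycle4_edges u a w c, cycle4_edges u b w c}"
    using assms(2) by (intro card_mono) auto
  also have "\<dots> \<le> 3"
    using card_length[of "[cycle4_edges u a w b, cycle4_edges u a w c, cycle4_edges u b w c]"] by simp
  finally show ?thesis .
qed

definition nbhd2 :: "('a \<Rightarrow> 'a \<Rightarrow> bool) \<Rightarrow> 'a \<Rightarrow> 'a set" where
  "nbhd2 E v = insert v {y. E v y} \<union> (\<Union>z\<in>{y. E v y}. {y. E z y})"

lemma nbhd2_intros:
  "v \<in> nbhd2 E v"
  "E v y \<Longrightarrow> y \<in> nbhd2 E v"
  "E v z \<Longrightarrow> E z y \<Longrightarrow> y \<in> nbhd2 E v"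
  unfolding nbhd2_def by blast+

lemma finite_copies_at:
  assumes "\<And>x. finite {y. E x y}"
    and "\<And>H. H \<in> S \<Longrightarrow> v \<in> \<Union>H \<Longrightarrow> \<Union>H \<subseteq> nbhd2 E v"
  shows "finite {H \<in> S. v \<in> \<Union>H}"
proof (rule finite_subset)
  show "{H \<in> S. v \<in> \<Union>H} \<subseteq> Pow (Pow (nbhd2 E v))"
    using assms(2) by blast
  show "finite (Pow (Pow (nbhd2 E v)))"
    using assms(1) by (simp add: nbhd2_def)
qed

lemma finite_cycle4_copies_at:
  assumes sym: "\<And>x y. E x y \<Longrightarrow> E y x" and fin: "\<And>x. finite {y. E x y}"
  shows "finite {H \<in> cycle_subgraphs E 4. v \<in> \<Union>H}"
proof (rule finite_copies_at[OF fin])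
  fix H assume "H \<in> cycle_subgraphs E 4" "v \<in> \<Union>H"
  then obtain a b c d where H: "H = cycle4_edges a b c d" "E a b" "E b c" "E c d" "E d a"
    unfolding cycle_subgraphs_4_iff by blast
  moreover have "v \<in> {a, b, c, d}"
    using \<open>v \<in> \<Union>H\<close> by (simp add: H(1) Union_cycle4_edges)
  ultimately have "{a, b, c, d} \<subseteq> nbhd2 E v"
    using sym by (auto intro: nbhd2_intros)
  then show "\<Union>H \<subseteq> nbhd2 E v"
    by (simp add: H(1) Union_cycle4_edges)
qed

lemma finite_theta222_copies_at:
  assumes sym: "\<And>x y. E x y \<Longrightarrow> E y x" and fin: "\<And>x. finite {y. E x y}"
  shows "finite {H \<in> theta222_subgraphs E. v \<in> \<Union>H}"
proof (rule finite_copies_at[OF fin])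
  fix H assume "H \<in> theta222_subgraphs E" "v \<in> \<Union>H"
  then obtain u w a b c where H: "H = theta222_edges u w a b c"
      "E u a" "E a w" "E u b" "E b w" "E u c" "E c w"
    unfolding theta222_subgraphs_def theta222_edges_def[symmetric] by blast
  moreover have "v \<in> {u, w, a, b, c}"
    using \<open>v \<in> \<Union>H\<close> by (simp add: H(1) Union_theta222_edges)
  ultimately have "{u, w, a, b, c} \<subseteq> nbhd2 E v"
    using sym by (auto intro: nbhd2_intros)
  then show "\<Union>H \<subseteq> nbhd2 E v"
    by (simp add: H(1) Union_theta222_edges)
qed

lemma theta222_edges_in_subgraphs:
  "distinct [u, w, a, b, c] \<Longrightarrow> E u a \<Longrightarrow> E a w \<Longrightarrow> E u b \<Longrightarrow> E b w \<Longrightarrow> E u c \<Longrightarrow> E c w \<Longrightarrow>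
    theta222_edges u w a b c \<in> theta222_subgraphs E"
  unfolding theta222_subgraphs_def theta222_edges_def by blast

lemma cycle4_edges_subset_theta222_edges: "cycle4_edges a b c d \<subseteq> theta222_edges a c b d y"
  by (auto simp: cycle4_edges_def theta222_edges_def insert_commute)

lemma card_theta222_containing_cycle4_ge:
  assumes sym: "\<And>x y. E x y \<Longrightarrow> E y x" and irrefl: "\<And>x. \<not> E x x"
    and fin: "\<And>x. finite {y. E x y}"
    and C: "distinct [a, b, c, d]" "E a b" "E b c" "E c d" "E d a"
    and twins: "{y. E a y} = {y. E c y}"
  shows "card {y. E a y} - 2 \<le> card {T \<in> theta222_subgraphs E. cycle4_edges a b c d \<subseteq> T}"
proof -
  let ?N = "{y. E a y} - {b, d}"
  let ?\<Theta> = "{T \<in> theta222_subgraphs E. cycle4_edges a b c d \<subseteq> T}"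
  have theta: "theta222_edges a c b d y \<in> ?\<Theta>" if "y \<in> ?N" for y
  proof -
    have "E a y" "E c y"
      using that twins by auto
    moreover have "distinct [a, c, b, d, y]"
      using C(1) that irrefl \<open>E c y\<close> by auto
    ultimately show ?thesis
      using C(2-5) sym by (simp add: theta222_edges_in_subgraphs cycle4_edges_subset_theta222_edges)
  qed
  have "inj_on (theta222_edges a c b d) ?N"
  proof
    fix y y' assume y: "y \<in> ?N" "y' \<in> ?N" "theta222_edges a c b d y = theta222_edges a c b d y'"
    have "y \<in> \<Union>(theta222_edges a c b d y)"
      by (simp add: Union_theta222_edges)
    then have "y \<in> {a, c, b, d, y'}"
      unfolding y(3) Union_theta222_edges .
    moreover have "y \<noteq> a" "y \<noteq> c"
      using y(1) irrefl twins by auto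
    ultimately show "y = y'"
      using y(1) by auto
  qed
  then have "card ?N \<le> card ?\<Theta>"
  proof (rule card_inj_on_le)
    show "theta222_edges a c b d ` ?N \<subseteq> ?\<Theta>"
      using theta by blast
    show "finite ?\<Theta>"
      by (rule finite_subset[OF _ finite_theta222_copies_at[OF sym fin, where v = a]])
        (auto simp: cycle4_edges_def)
  qed
  moreover have "card ?N = card {y. E a y} - 2"
    using C(1,2,5) sym fin[of a] by (simp add: card_Diff_subset)
  ultimately show ?thesis
    by simp
qed

lemma card_theta222_containing_cycle4_subgraph_ge:
  assumes sym: "\<And>x y. E x y \<Longrightarrow> E y x" and irrefl: "\<And>x. \<not> E x x"
    and fin: "\<And>x. finite {y. E x y}"
    and deg: "\<And>x y. E x y \<Longrightarrow> card {z. E x z} = D"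
    and twins: "\<And>a b c d. distinct [a, b, c, d] \<Longrightarrow> E a b \<Longrightarrow> E b c \<Longrightarrow> E c d \<Longrightarrow> E d a \<Longrightarrow>
      {y. E a y} = {y. E c y} \<or> {y. E b y} = {y. E d y}"
    and C: "C \<in> cycle_subgraphs E 4"
  shows "D - 2 \<le> card {T \<in> theta222_subgraphs E. C \<subseteq> T}"
proof -
  obtain a b c d where abcd: "distinct [a, b, c, d]" "E a b" "E b c" "E c d" "E d a"
    and C_eq: "C = cycle4_edges a b c d"
    using C unfolding cycle_subgraphs_4_iff by blast
  from twins[OF abcd] show ?thesis
  proof
    assume "{y. E a y} = {y. E c y}"
    then show ?thesis
      using card_theta222_containing_cycle4_ge[OF sym irrefl fin abcd] deg[OF abcd(2)] C_eq
      by simp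
  next
    assume "{y. E b y} = {y. E d y}"
    moreover have "distinct [b, c, d, a]"
      using abcd(1) by auto
    ultimately show ?thesis
      using card_theta222_containing_cycle4_ge[OF sym irrefl fin, of b c d a] abcd deg[OF abcd(3)]
        C_eq cycle4_edges_rotate[of a b c d]
      by simp
  qed
qed

lemma double_counting_le:
  assumes "finite A" "finite B"
    and "\<And>a. a \<in> A \<Longrightarrow> k \<le> card {b \<in> B. R a b}"
    and "\<And>b. b \<in> B \<Longrightarrow> card {a \<in> A. R a b} \<le> l"
  shows "k * card A \<le> l * card B"
proof -
  have "k * card A = (\<Sum>a\<in>A. k)"
    by simp
  also have "\<dots> \<le> (\<Sum>a\<in>A. card {b \<in> B. R a b})"
    using assms(3) by (rule sum_mono)
  also have "\<dots> = (\<Sum>a\<in>A. \<Sum>b\<in>B. if R a b then 1 else 0)"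
    using assms(2) by (simp add: sum.inter_filter[symmetric])
  also have "\<dots> = (\<Sum>b\<in>B. \<Sum>a\<in>A. if R a b then 1 else 0)"
    by (rule sum.swap)
  also have "\<dots> = (\<Sum>b\<in>B. card {a \<in> A. R a b})"
    using assms(1) by (simp add: sum.inter_filter[symmetric])
  also have "\<dots> \<le> (\<Sum>b\<in>B. l)"
    using assms(4) by (rule sum_mono)
  finally show ?thesis
    by (simp add: mult.commute)
qed

lemma theta222_copies_ge_cycle4_copies:
  assumes sym: "\<And>x y. E x y \<Longrightarrow> E y x" and irrefl: "\<And>x. \<not> E x x"
    and fin: "\<And>x. finite {y. E x y}"
    and deg: "\<And>x y. E x y \<Longrightarrow> card {z. E x z} = D"
    and twins: "\<And>a b c d. distinct [a, b, c, d] \<Longrightarrow> E a b \<Longrightarrow> E b c \<Longrightarrow> E c d \<Longrightarrow> E d a \<Longrightarrow>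
      {y. E a y} = {y. E c y} \<or> {y. E b y} = {y. E d y}"
  shows "(D - 2) * copies_at (cycle_subgraphs E 4) v \<le> 3 * copies_at (theta222_subgraphs E) v"
  unfolding copies_at_def
proof (rule double_counting_le[where R = "(\<subseteq>)"])
  show "finite {H \<in> cycle_subgraphs E 4. v \<in> \<Union>H}"
    using sym fin by (rule finite_cycle4_copies_at)
  show "finite {H \<in> theta222_subgraphs E. v \<in> \<Union>H}"
    using sym fin by (rule finite_theta222_copies_at)
next
  fix C assume C: "C \<in> {H \<in> cycle_subgraphs E 4. v \<in> \<Union>H}"
  then have "D - 2 \<le> card {T \<in> theta222_subgraphs E. C \<subseteq> T}"
    by (intro card_theta222_containing_cycle4_subgraph_ge[OF sym irrefl fin deg twins]) auto
  also have "{T \<in> theta222_subgraphs E. C \<subseteq> T} = {T \<in> {H \<in> theta222_subgraphs E. v \<in> \<Union>H}. C \<subseteq> T}"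
    using C by auto
  finally show "D - 2 \<le> card {T \<in> {H \<in> theta222_subgraphs E. v \<in> \<Union>H}. C \<subseteq> T}" .
next
  fix T assume "T \<in> {H \<in> theta222_subgraphs E. v \<in> \<Union>H}"
  then show "card {C \<in> {H \<in> cycle_subgraphs E 4. v \<in> \<Union>H}. C \<subseteq> T} \<le> 3"
    by (intro card_cycle4_subgraphs_within_theta222_le) auto
qed

lemma theta222_bar_div_C4_bar_ge:
  assumes "finite (reps V)" "v\<^sub>0 \<in> reps V" "0 < copies_at (cycle_subgraphs E 4) v\<^sub>0"
    and "\<And>v. K * copies_at (cycle_subgraphs E 4) v \<le> 3 * copies_at (theta222_subgraphs E) v"
  shows "4 * real K / 15 \<le> theta222_bar V E / C4_bar V E"
proof -
  define c where "c v = real (copies_at (cycle_subgraphs E 4) v) / 4" for v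
  define t where "t v = real (copies_at (theta222_subgraphs E) v) / 5" for v
  have "0 < c v\<^sub>0"
    using assms(3) by (simp add: c_def)
  then have pos: "0 < (\<Sum>v\<in>reps V. c v)"
    using assms(1,2) by (intro sum_pos2[of _ v\<^sub>0]) (auto simp: c_def)
  have "4 * real K / 15 * c v \<le> t v" for v
  proof -
    have "real (K * copies_at (cycle_subgraphs E 4) v) \<le> real (3 * copies_at (theta222_subgraphs E) v)"
      using assms(4) by (rule of_nat_mono)
    then show ?thesis
      by (simp add: c_def t_def)
  qed
  then have "4 * real K / 15 * (\<Sum>v\<in>reps V. c v) \<le> (\<Sum>v\<in>reps V. t v)"
    by (simp add: sum_distrib_left sum_mono)
  moreover have "theta222_bar V E / C4_bar V E = (\<Sum>v\<in>reps V. t v) / (\<Sum>v\<in>reps V. c v)"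
    using assms(1,2) by (auto simp: theta222_bar_def C4_bar_def c_def t_def card_gt_0_iff)
  ultimately show ?thesis
    using pos by (simp add: pos_le_divide_eq)
qed

section \<open>Sites in the unit cube and straight edges between them\<close>

lemma Ints_abs_less_one: "(x::real) \<in> \<int> \<Longrightarrow> \<bar>x\<bar> < 1 \<Longrightarrow> x = 0"
  by (auto elim!: Ints_cases)

lemma Ints_neq_fraction:
  fixes x :: real
  assumes "x \<in> \<int>" "0 < l" "l < 1" "0 < \<bar>c\<bar>" "\<bar>c\<bar> \<le> 1"
  shows "x \<noteq> c * l"
proof
  assume x: "x = c * l"
  have "\<bar>c * l\<bar> = \<bar>c\<bar> * l"
    using assms(2) by (simp add: abs_mult)
  moreover have "\<bar>c\<bar> * l \<le> l"
    using assms(2,5) mult_right_mono[of "\<bar>c\<bar>" 1 l] by simp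
  ultimately have "\<bar>c * l\<bar> < 1"
    using assms(3) by linarith
  then have "c * l = 0"
    using assms(1) x Ints_abs_less_one by blast
  then show False
    using assms(2,4) by simp
qed

lemma half_not_Ints: "(1/2 :: real) \<notin> \<int>"
proof
  assume "(1/2 :: real) \<in> \<int>"
  then obtain k :: int where "1/2 = real_of_int k"
    by (auto elim: Ints_cases)
  then have "1 = 2 * k"
    by linarith
  then show False
    by presburger
qed

lemma abs_mult_less_of_unit_interval: "0 \<le> l \<Longrightarrow> l \<le> 1 \<Longrightarrow> \<bar>x\<bar> < c \<Longrightarrow> \<bar>l * x\<bar> < (c::real)"
  by (simp add: abs_mult) (smt (verit) mult_left_le_one_le abs_ge_zero)

lemma integer_vector_add: "integer_vector a \<Longrightarrow> integer_vector b \<Longrightarrow> integer_vector (a + b)"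
  and integer_vector_diff: "integer_vector a \<Longrightarrow> integer_vector b \<Longrightarrow> integer_vector (a - b)"
  and integer_vector_uminus: "integer_vector a \<Longrightarrow> integer_vector (- a)"
  and integer_vector_of_int_scaleR: "integer_vector a \<Longrightarrow> integer_vector (of_int k *\<^sub>R a)"
  and integer_vector_zero: "integer_vector 0"
  by (auto simp: integer_vector_def)

definition dir :: "nat \<Rightarrow> real^3" where
  "dir k = vector [if k = 0 then 1 else 0, if k = 1 then 1 else 0, if k = 2 then 1 else 0]"

lemma integer_vector_dir: "integer_vector (dir i)"
  unfolding integer_vector_def by (simp add: dir_def forall_3)

definition x_site :: "real \<Rightarrow> real^3" where
  "x_site s = vector [1/2 + s, 1/2 - s, 1/2]"

definition y_site :: "real \<Rightarrow> real^3" where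
  "y_site t = vector [1/3, 1/3 + t, 1/3 - t]"

definition tau :: "nat \<Rightarrow> real" where
  "tau k = (3 + real k) / 16"

definition coord_sum :: "real^3 \<Rightarrow> real" where
  "coord_sum x = x $ 1 + x $ 2 + x $ 3"

lemma integer_vector_coord_sum: "integer_vector z \<Longrightarrow> coord_sum z \<in> \<int>"
  by (simp add: integer_vector_def coord_sum_def)

lemma coord_sum_dir: "i < 3 \<Longrightarrow> coord_sum (dir i) = 1"
  by (auto simp: coord_sum_def dir_def less_Suc_eq numeral_eq_Suc)

lemma x_site_eq:
  assumes "integer_vector z" "integer_vector z'" "0 < s" "s \<le> 1/4" "0 < s'" "s' \<le> 1/4"
    and "z + x_site s = z' + x_site s'"
  shows "z = z' \<and> s = s'"
proof -
  have c: "z$1 + s = z'$1 + s'" "z$2 - s = z'$2 - s'" "z$3 = z'$3"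
    using assms(7) by (simp_all add: vec_eq_iff forall_3 x_site_def)
  have "z$1 - z'$1 \<in> \<int>"
    using assms(1,2) by (simp add: integer_vector_def)
  moreover have "\<bar>z$1 - z'$1\<bar> < 1"
    using c(1) assms(3-6) by arith
  ultimately have "z$1 = z'$1"
    using Ints_abs_less_one by fastforce
  then show ?thesis
    using c by (simp add: vec_eq_iff forall_3)
qed

lemma y_site_eq:
  assumes "integer_vector y" "integer_vector y'" "0 < t" "t \<le> 5/16" "0 < t'" "t' \<le> 5/16"
    and "y + y_site t = y' + y_site t'"
  shows "y = y' \<and> t = t'"
proof -
  have c: "y$1 = y'$1" "y$2 + t = y'$2 + t'" "y$3 - t = y'$3 - t'"
    using assms(7) by (simp_all add: vec_eq_iff forall_3 y_site_def)
  have "y$2 - y'$2 \<in> \<int>"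
    using assms(1,2) by (simp add: integer_vector_def)
  moreover have "\<bar>y$2 - y'$2\<bar> < 1"
    using c(2) assms(3-6) by arith
  ultimately have "y$2 = y'$2"
    using Ints_abs_less_one by fastforce
  then show ?thesis
    using c by (simp add: vec_eq_iff forall_3)
qed

definition site_edge :: "real^3 \<Rightarrow> real \<Rightarrow> real^3 \<Rightarrow> real \<Rightarrow> bool" where
  "site_edge z s k t \<longleftrightarrow> integer_vector z \<and> 0 < s \<and> s \<le> 1/4 \<and> 0 < t \<and> t \<le> 5/16 \<and>
     (k = 0 \<or> (\<exists>i<3. k = dir i \<and> t = tau i))"

definition edge_point :: "real^3 \<Rightarrow> real \<Rightarrow> real^3 \<Rightarrow> real \<Rightarrow> real \<Rightarrow> real^3" where
  "edge_point z s k t l = (1 - l) *\<^sub>R (z + x_site s) + l *\<^sub>R (z + k + y_site t)"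

lemma coord_sum_edge_point:
  "coord_sum (edge_point z s k t l) = coord_sum z + 3/2 + l * (coord_sum k - 1/2)"
  by (simp add: edge_point_def coord_sum_def x_site_def y_site_def algebra_simps)

lemma site_edge_coord_sum_shift:
  "site_edge z s k t \<Longrightarrow> coord_sum k = 0 \<and> k = 0 \<or> coord_sum k = 1"
  by (auto simp: site_edge_def coord_sum_dir) (simp add: coord_sum_def)

(* The coordinate sum is affine along an edge, 1/2 modulo 1 at its x-site and an integer at its
   y-site; so a common point of two edges lies at the same parameter on both, unless it is an
   endpoint of both. *)
lemma site_edge_crossing_levels:
  assumes e1: "site_edge z1 s1 k1 t1" and e2: "site_edge z2 s2 k2 t2"
    and l: "0 \<le> l" "l \<le> 1" and m: "0 \<le> m" "m \<le> 1"
    and eq: "edge_point z1 s1 k1 t1 l = edge_point z2 s2 k2 t2 m"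
  shows "(l = 0 \<and> m = 0) \<or> (l = 1 \<and> m = 1) \<or> (l = m \<and> coord_sum k1 = coord_sum k2)"
proof -
  define D where "D = coord_sum z1 - coord_sum z2"
  have D: "D \<in> \<int>"
    using e1 e2 by (simp add: D_def site_edge_def integer_vector_coord_sum)
  have sum: "D + l * (coord_sum k1 - 1/2) - m * (coord_sum k2 - 1/2) = 0"
    using arg_cong[OF eq, of coord_sum] by (simp add: D_def coord_sum_edge_point algebra_simps)
  consider "coord_sum k1 = coord_sum k2" | "coord_sum k1 = 0" "coord_sum k2 = 1"
    | "coord_sum k1 = 1" "coord_sum k2 = 0"
    using site_edge_coord_sum_shift[OF e1] site_edge_coord_sum_shift[OF e2] by linarith
  then show ?thesis
  proof cases
    case 1
    then have "\<bar>D\<bar> < 1"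
      using sum site_edge_coord_sum_shift[OF e1] l m by auto
    then have "D = 0"
      using D Ints_abs_less_one by blast
    then show ?thesis
      using sum 1 site_edge_coord_sum_shift[OF e1] by auto
  next
    case 2
    then have "D = (l + m) / 2"
      using sum by simp
    then have "D = 0 \<or> D = 1"
      using D l m by (auto elim!: Ints_cases)
    then show ?thesis
      using \<open>D = (l + m) / 2\<close> l m by auto
  next
    case 3
    then have "D = - (l + m) / 2"
      using sum by simp
    then have "D = 0 \<or> D = -1"
      using D l m by (auto elim!: Ints_cases)
    then show ?thesis
      using \<open>D = - (l + m) / 2\<close> l m by auto
  qed
qed

lemma edge_point_eq_components:
  assumes "edge_point z1 s1 k1 t1 l = edge_point z2 s2 k2 t2 l"
  shows "z1$1 - z2$1 + (1 - l) * (s1 - s2) + l * (k1$1 - k2$1) = 0"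
    "z1$2 - z2$2 - (1 - l) * (s1 - s2) + l * (t1 - t2) + l * (k1$2 - k2$2) = 0"
    "z1$3 - z2$3 - l * (t1 - t2) + l * (k1$3 - k2$3) = 0"
  using arg_cong[OF assms, of "\<lambda>x. x $ 1"] arg_cong[OF assms, of "\<lambda>x. x $ 2"]
    arg_cong[OF assms, of "\<lambda>x. x $ 3"]
  by (simp_all add: edge_point_def x_site_def y_site_def algebra_simps)

lemma site_edge_crossing_same_shift:
  assumes e1: "site_edge z1 s1 k t1" and e2: "site_edge z2 s2 k t2" and l: "0 < l" "l < 1"
    and eq: "edge_point z1 s1 k t1 l = edge_point z2 s2 k t2 l"
  shows "z1 = z2 \<and> s1 = s2 \<and> t1 = t2"
proof -
  have D: "z1$j - z2$j \<in> \<int>" for j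
    using e1 e2 by (simp add: site_edge_def integer_vector_def)
  have "0 < s1 \<and> s1 \<le> 1/4 \<and> 0 < s2 \<and> s2 \<le> 1/4 \<and> 0 < t1 \<and> t1 \<le> 5/16 \<and> 0 < t2 \<and> t2 \<le> 5/16"
    using e1 e2 by (simp add: site_edge_def)
  then have diffs: "\<bar>s1 - s2\<bar> < 1/4" "\<bar>t1 - t2\<bar> < 5/16"
    by arith+
  have small: "\<bar>(1 - l) * (s1 - s2)\<bar> < 1/4" "\<bar>l * (t1 - t2)\<bar> < 5/16"
    by (rule abs_mult_less_of_unit_interval; use l diffs in simp)+
  note c = edge_point_eq_components[OF eq]
  have "z1$1 - z2$1 = 0" "z1$3 - z2$3 = 0"
    using c(1,3) small D[of 1] D[of 3] Ints_abs_less_one by force+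
  then have "(1 - l) * (s1 - s2) = 0" "l * (t1 - t2) = 0"
    using c(1,3) by simp_all
  moreover have "z1$2 - z2$2 = 0"
    using c(2) calculation by simp
  ultimately show ?thesis
    using \<open>z1$1 - z2$1 = 0\<close> \<open>z1$3 - z2$3 = 0\<close> l by (simp add: vec_eq_iff forall_3)
qed

(* The third coordinates of the cube corners differ by an integer, which the distinct parameters
   tau i, tau j turn into a nonzero multiple of l of modulus at most one. *)
lemma site_edge_crossing_distinct_shifts:
  assumes e1: "site_edge z1 s1 (dir i) (tau i)" and e2: "site_edge z2 s2 (dir j) (tau j)"
    and ij: "i < 3" "j < 3" "i \<noteq> j" and l: "0 < l" "l < 1"
    and eq: "edge_point z1 s1 (dir i) (tau i) l = edge_point z2 s2 (dir j) (tau j) l"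
  shows False
proof -
  define c where "c = (tau i - tau j) - (dir i $ 3 - dir j $ 3)"
  have "z1$3 - z2$3 \<in> \<int>"
    using e1 e2 by (simp add: site_edge_def integer_vector_def)
  moreover have "0 < \<bar>c\<bar>" "\<bar>c\<bar> \<le> 1"
    using ij by (auto simp: c_def tau_def dir_def less_Suc_eq numeral_eq_Suc)
  ultimately have "z1$3 - z2$3 \<noteq> c * l"
    using l Ints_neq_fraction by blast
  then show False
    using edge_point_eq_components(3)[OF eq] by (simp add: c_def algebra_simps)
qed

lemma closed_segment_site_edge:
  "P \<in> closed_segment (z + x_site s) (z + k + y_site t) \<longleftrightarrow> (\<exists>l. 0 \<le> l \<and> l \<le> 1 \<and> P = edge_point z s k t l)"
  by (auto simp: closed_segment_def edge_point_def)

lemma site_edge_segments_meet_at_ends: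
  assumes e1: "site_edge z1 s1 k1 t1" and e2: "site_edge z2 s2 k2 t2"
    and P: "P \<in> closed_segment (z1 + x_site s1) (z1 + k1 + y_site t1)"
      "P \<in> closed_segment (z2 + x_site s2) (z2 + k2 + y_site t2)"
  shows "(P = z1 + x_site s1 \<and> P = z2 + x_site s2) \<or> (P = z1 + k1 + y_site t1 \<and> P = z2 + k2 + y_site t2) \<or>
    (z1 = z2 \<and> s1 = s2 \<and> k1 = k2 \<and> t1 = t2)"
proof -
  obtain l m where lm: "0 \<le> l" "l \<le> 1" "0 \<le> m" "m \<le> 1"
    and P_eq: "P = edge_point z1 s1 k1 t1 l" "P = edge_point z2 s2 k2 t2 m"
    using P unfolding closed_segment_site_edge by blast
  have ends: "edge_point z s k t 0 = z + x_site s" "edge_point z s k t 1 = z + k + y_site t" for z s k t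
    by (simp_all add: edge_point_def)
  consider "l = 0" "m = 0" | "l = 1" "m = 1" | "0 < l" "l < 1" "m = l" "coord_sum k1 = coord_sum k2"
    using site_edge_crossing_levels[OF e1 e2 lm] P_eq lm by fastforce
  then show ?thesis
  proof cases
    case 3
    have eq: "edge_point z1 s1 k1 t1 l = edge_point z2 s2 k2 t2 l"
      using P_eq 3(3) by simp
    show ?thesis
    proof (cases "k1 = k2")
      case True
      then show ?thesis
        using site_edge_crossing_same_shift[OF e1 e2[folded True] 3(1,2) eq[folded True]] by simp
    next
      case False
      have "coord_sum 0 = 0"
        by (simp add: coord_sum_def)
      then have "k1 \<noteq> 0" "k2 \<noteq> 0"
        using False 3(4) site_edge_coord_sum_shift[OF e1] site_edge_coord_sum_shift[OF e2] by auto
      then obtain i j where "i < 3" "j < 3" "k1 = dir i" "t1 = tau i" "k2 = dir j" "t2 = tau j"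
        using e1 e2 unfolding site_edge_def by blast
      moreover have "i \<noteq> j"
        using False calculation by blast
      ultimately show ?thesis
        using site_edge_crossing_distinct_shifts[of z1 s1 i z2 s2 j l] e1 e2 3(1,2) eq by simp
    qed
  qed (use P_eq ends in auto)
qed

section \<open>The incidence graph of the coordinate lines of a Hamming space\<close>

(* Pt z p b is the twin b of the point p in the cube with corner z; Ln y i w is the line in
   direction i through w, normalised by w ! i = 0, drawn in the cube with corner y. *)
datatype vert = Pt "real^3" "nat list" bool | Ln "real^3" nat "nat list"

definition word :: "nat \<Rightarrow> nat list \<Rightarrow> bool" where
  "word m p \<longleftrightarrow> length p = 2 * m \<and> (\<forall>x\<in>set p. x < m)"

definition line :: "nat \<Rightarrow> nat \<Rightarrow> nat list \<Rightarrow> bool" where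
  "line m i w \<longleftrightarrow> i < 2 * m \<and> word m w \<and> w ! i = 0"

definition on_line :: "nat list \<Rightarrow> nat \<Rightarrow> nat list \<Rightarrow> bool" where
  "on_line p i w \<longleftrightarrow> (\<forall>j<length p. j \<noteq> i \<longrightarrow> p ! j = w ! j)"

definition zero_word :: "nat \<Rightarrow> nat list" where
  "zero_word m = replicate (2 * m) 0"

(* The zero word of the cube z is joined to the lines through it in directions 0, 1, 2 of the
   cubes z + dir i instead of those of its own cube. *)
definition cube_shift :: "nat \<Rightarrow> nat list \<Rightarrow> nat \<Rightarrow> real^3" where
  "cube_shift m p i = (if i < 3 \<and> p = zero_word m then dir i else 0)"

definition incident :: "nat \<Rightarrow> real^3 \<Rightarrow> nat list \<Rightarrow> real^3 \<Rightarrow> nat \<Rightarrow> nat list \<Rightarrow> bool" where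
  "incident m z p y i w \<longleftrightarrow>
     integer_vector z \<and> word m p \<and> line m i w \<and> on_line p i w \<and> y = z + cube_shift m p i"

fun adj :: "nat \<Rightarrow> vert \<Rightarrow> vert \<Rightarrow> bool" where
  "adj m (Pt z p b) (Ln y i w) = incident m z p y i w"
| "adj m (Ln y i w) (Pt z p b) = incident m z p y i w"
| "adj m (Pt _ _ _) (Pt _ _ _) = False"
| "adj m (Ln _ _ _) (Ln _ _ _) = False"

fun valid :: "nat \<Rightarrow> vert \<Rightarrow> bool" where
  "valid m (Pt z p b) \<longleftrightarrow> integer_vector z \<and> word m p"
| "valid m (Ln y i w) \<longleftrightarrow> integer_vector y \<and> line m i w"

lemma integer_vector_cube_shift: "integer_vector (cube_shift m p i)"
  by (simp add: cube_shift_def integer_vector_dir integer_vector_zero)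

lemma word_length: "word m p \<Longrightarrow> length p = 2 * m"
  by (simp add: word_def)

lemma word_nth_less: "word m p \<Longrightarrow> j < 2 * m \<Longrightarrow> p ! j < m"
  by (simp add: word_def)

lemma word_update: "word m p \<Longrightarrow> c < m \<Longrightarrow> word m (p[i := c])"
  unfolding word_def by (auto dest: set_update_subset_insert[THEN subsetD])

lemma word_zero_word: "0 < m \<Longrightarrow> word m (zero_word m)"
  by (simp add: word_def zero_word_def)

lemma zero_word_update: "(zero_word m)[i := 0] = zero_word m"
  unfolding zero_word_def by (cases "i < 2 * m") (auto simp: list_eq_iff_nth_eq nth_list_update)

lemma line_through: "word m p \<Longrightarrow> i < 2 * m \<Longrightarrow> line m i (p[i := 0]) \<and> on_line p i (p[i := 0])"
  unfolding line_def on_line_def by (auto simp: word_update word_length nth_list_update)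

lemma on_line_update: "on_line (w[i := c]) i w"
  unfolding on_line_def by (auto simp: nth_list_update)

lemma on_line_imp_eq_update:
  assumes "word m p" "line m i w" "on_line p i w"
  shows "w = p[i := 0]" "p = w[i := p ! i]"
  using assms unfolding line_def on_line_def word_def
  by (auto intro!: nth_equalityI simp: nth_list_update)

lemma on_line_agree:
  "on_line p i w \<Longrightarrow> on_line q i w \<Longrightarrow> j < length p \<Longrightarrow> j < length q \<Longrightarrow> j \<noteq> i \<Longrightarrow> p ! j = q ! j"
  unfolding on_line_def by simp

lemma words_differ_at_line_direction:
  assumes "word m p" "word m q" "p \<noteq> q" "on_line p i w" "on_line q i w"
  shows "i < 2 * m" "p ! i \<noteq> q ! i"
proof -
  obtain j where "j < 2 * m" "p ! j \<noteq> q ! j"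
    using assms(1-3) nth_equalityI[of p q] by (auto simp: word_length)
  moreover have "j = i"
    using calculation on_line_agree[OF assms(4,5), of j] assms(1,2) by (auto simp: word_length)
  ultimately show "i < 2 * m" "p ! i \<noteq> q ! i"
    by simp_all
qed

lemma two_points_one_line:
  assumes "word m p" "word m q" "p \<noteq> q" "line m i w" "line m i' w'"
    "on_line p i w" "on_line q i w" "on_line p i' w'" "on_line q i' w'"
  shows "i = i' \<and> w = w'"
proof -
  have "i = i'"
  proof (rule ccontr)
    assume "i \<noteq> i'"
    then have "p ! j = q ! j" if "j < length p" for j
      using that on_line_agree[OF assms(6,7), of j] on_line_agree[OF assms(8,9), of j] assms(1,2)
      by (cases "j = i") (auto simp: word_length)
    then have "p = q"
      using assms(1,2) by (auto intro: nth_equalityI simp: word_length)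
    then show False
      using assms(3) by simp
  qed
  then show ?thesis
    using on_line_imp_eq_update(1)[OF assms(1,4,6)] on_line_imp_eq_update(1)[OF assms(1,5,8)] by simp
qed

lemma no_line_triangle:
  assumes words: "word m p0" "word m p1" "word m p2"
    and distinct: "p0 \<noteq> p1" "p1 \<noteq> p2" "p2 \<noteq> p0"
    and lines: "line m i0 w0" "line m i1 w1"
    and on: "on_line p0 i0 w0" "on_line p1 i0 w0" "on_line p1 i1 w1" "on_line p2 i1 w1"
      "on_line p2 i2 w2" "on_line p0 i2 w2"
  shows "i0 = i1 \<and> w0 = w1"
proof -
  have len: "length p0 = 2 * m" "length p1 = 2 * m" "length p2 = 2 * m"
    using words by (simp_all add: word_length)
  note d0 = words_differ_at_line_direction[OF words(1,2) distinct(1) on(1,2)]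
  note d1 = words_differ_at_line_direction[OF words(2,3) distinct(2) on(3,4)]
  have "i0 = i1"
  proof (rule ccontr)
    assume ne: "i0 \<noteq> i1"
    have "p0 ! i0 \<noteq> p2 ! i0"
      using d0 on_line_agree[OF on(3,4), of i0] ne len by simp
    then have "i2 = i0"
      using on_line_agree[OF on(5,6), of i0] d0(1) len by auto
    have "p0 ! i1 \<noteq> p2 ! i1"
      using d1 on_line_agree[OF on(1,2), of i1] ne len by simp
    then have "i2 = i1"
      using on_line_agree[OF on(5,6), of i1] d1(1) len by auto
    with \<open>i2 = i0\<close> ne show False
      by simp
  qed
  then show ?thesis
    using on_line_imp_eq_update(1)[OF words(2) lines(1) on(2)] on_line_imp_eq_update(1)[OF words(2) lines(2) on(3)]
    by simp
qed

lemma adj_PtE: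
  assumes "adj m (Pt z p b) v"
  obtains y i w where "v = Ln y i w" "incident m z p y i w"
  using assms by (cases v) auto

lemma adj_LnE:
  assumes "adj m (Ln y i w) v"
  obtains z p b where "v = Pt z p b" "incident m z p y i w"
  using assms by (cases v) auto

lemma adj_sym: "adj m u v = adj m v u"
  by (cases u; cases v) auto

lemma adj_Pt_twin: "adj m (Pt z p b) v = adj m (Pt z p b') v"
  by (cases v) auto

lemma adj_valid: "adj m u v \<Longrightarrow> valid m u \<and> valid m v"
  by (cases u; cases v) (auto simp: incident_def integer_vector_add integer_vector_cube_shift)

lemma adj_irrefl: "\<not> adj m u u"
  by (cases u) auto

lemma adj_neighbours_Pt:
  assumes "valid m (Pt z p b)"
  shows "{v. adj m (Pt z p b) v} = (\<lambda>i. Ln (z + cube_shift m p i) i (p[i := 0])) ` {..<2 * m}"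
proof
  show "{v. adj m (Pt z p b) v} \<subseteq> (\<lambda>i. Ln (z + cube_shift m p i) i (p[i := 0])) ` {..<2 * m}"
  proof
    fix v assume "v \<in> {v. adj m (Pt z p b) v}"
    then obtain y i w where v: "v = Ln y i w" "incident m z p y i w"
      by (auto elim: adj_PtE)
    then have "w = p[i := 0]" "i < 2 * m"
      using on_line_imp_eq_update(1)[of m p i w] unfolding incident_def line_def by auto
    then show "v \<in> (\<lambda>i. Ln (z + cube_shift m p i) i (p[i := 0])) ` {..<2 * m}"
      using v unfolding incident_def by auto
  qed
  show "(\<lambda>i. Ln (z + cube_shift m p i) i (p[i := 0])) ` {..<2 * m} \<subseteq> {v. adj m (Pt z p b) v}"
    using assms line_through[of m p] by (auto simp: incident_def)
qed

lemma adj_neighbours_Ln: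
  assumes "valid m (Ln y i w)"
  shows "{v. adj m (Ln y i w) v} =
    (\<lambda>(c, b). Pt (y - cube_shift m (w[i := c]) i) (w[i := c]) b) ` ({..<m} \<times> UNIV)"
proof
  show "{v. adj m (Ln y i w) v} \<subseteq> (\<lambda>(c, b). Pt (y - cube_shift m (w[i := c]) i) (w[i := c]) b) ` ({..<m} \<times> UNIV)"
  proof
    fix v assume "v \<in> {v. adj m (Ln y i w) v}"
    then obtain z p b where v: "v = Pt z p b" "incident m z p y i w"
      by (auto elim: adj_LnE)
    then have p: "p = w[i := p ! i]"
      using on_line_imp_eq_update(2)[of m p i w] unfolding incident_def by auto
    have "p ! i < m"
      using v(2) unfolding incident_def word_def line_def by auto
    then show "v \<in> (\<lambda>(c, b). Pt (y - cube_shift m (w[i := c]) i) (w[i := c]) b) ` ({..<m} \<times> UNIV)"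
      using v p unfolding incident_def by (auto intro!: image_eqI[of _ _ "(p ! i, b)"])
  qed
  show "(\<lambda>(c, b). Pt (y - cube_shift m (w[i := c]) i) (w[i := c]) b) ` ({..<m} \<times> UNIV) \<subseteq> {v. adj m (Ln y i w) v}"
    using assms by (auto simp: incident_def line_def word_update on_line_update
        integer_vector_diff integer_vector_cube_shift)
qed

lemma card_adj_neighbours:
  assumes "valid m u"
  shows "finite {v. adj m u v} \<and> card {v. adj m u v} = 2 * m"
proof (cases u)
  case (Pt z p b)
  have "inj_on (\<lambda>i. Ln (z + cube_shift m p i) i (p[i := 0])) {..<2 * m}"
    by (auto simp: inj_on_def)
  then show ?thesis
    using assms Pt adj_neighbours_Pt by (simp add: card_image)
next
  case (Ln y i w)
  have "i < length w"
    using assms Ln by (simp add: line_def word_def)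
  then have "inj_on (\<lambda>(c, b). Pt (y - cube_shift m (w[i := c]) i) (w[i := c]) b) ({..<m} \<times> UNIV)"
    by (auto simp: inj_on_def dest: arg_cong[of _ _ "\<lambda>w. w ! i"])
  then show ?thesis
    using assms Ln adj_neighbours_Ln by (simp add: card_image card_cartesian_product)
qed

lemma adj_common_line_same_cube:
  assumes "adj m (Pt z p b) v" "adj m (Pt z' p b') v"
  shows "z = z'"
  using assms by (cases v) (auto simp: incident_def)

lemma adj_two_common_lines:
  assumes "adj m (Pt z p b) v" "adj m (Pt z p b) v'" "adj m (Pt z' q b') v" "adj m (Pt z' q b') v'"
    and "p \<noteq> q"
  shows "v = v'"
proof -
  obtain y i w where v: "v = Ln y i w"
    using assms(1) by (auto elim: adj_PtE)
  obtain y' i' w' where v': "v' = Ln y' i' w'"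
    using assms(2) by (auto elim: adj_PtE)
  have "i = i' \<and> w = w'"
    using assms v v' by (intro two_points_one_line[of m p q]) (auto simp: incident_def)
  then show ?thesis
    using assms(1,2) v v' by (simp add: incident_def)
qed

lemma adj_line_triangle:
  assumes "adj m (Pt z0 p0 b0) v0" "adj m (Pt z1 p1 b1) v0" "adj m (Pt z1 p1 b1) v1"
    "adj m (Pt z2 p2 b2) v1" "adj m (Pt z2 p2 b2) v2" "adj m (Pt z0 p0 b0) v2"
    and "p0 \<noteq> p1" "p1 \<noteq> p2" "p2 \<noteq> p0"
  shows "v0 = v1"
proof -
  obtain y0 i0 w0 where v0: "v0 = Ln y0 i0 w0"
    using assms(1) by (auto elim: adj_PtE)
  obtain y1 i1 w1 where v1: "v1 = Ln y1 i1 w1"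
    using assms(3) by (auto elim: adj_PtE)
  obtain y2 i2 w2 where v2: "v2 = Ln y2 i2 w2"
    using assms(5) by (auto elim: adj_PtE)
  have "i0 = i1 \<and> w0 = w1"
    using assms v0 v1 v2 by (intro no_line_triangle[of m p0 p1 p2 i0 w0 i1 w1 i2 w2]) (auto simp: incident_def)
  then show ?thesis
    using assms(2,3) v0 v1 by (simp add: incident_def)
qed

lemma adj_cycle4_twins:
  assumes "adj m (Pt z p b) v1" "adj m v1 v2" "adj m v2 v3" "adj m v3 (Pt z p b)"
    and "v1 \<noteq> v3"
  obtains b' where "v2 = Pt z p b'"
proof -
  obtain y i w where v1: "v1 = Ln y i w"
    using assms(1) by (auto elim: adj_PtE)
  obtain z' q b' where v2: "v2 = Pt z' q b'"
    using assms(2) v1 by (auto elim: adj_LnE)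
  have "q = p"
    using adj_two_common_lines[of m z p b v1 v3 z' q b'] assms adj_sym v2 by auto
  then have "z' = z"
    using adj_common_line_same_cube[of m z' p b' v1 z b] assms(1,2) adj_sym v2 by auto
  then show thesis
    using that v2 \<open>q = p\<close> by simp
qed

lemma adj_cycle6_consecutive_words_differ:
  assumes adj: "adj m (Pt z0 p0 b0) v1" "adj m v1 (Pt z1 p1 b1)" "adj m (Pt z1 p1 b1) v3"
    "adj m v3 (Pt z2 p2 b2)" "adj m (Pt z2 p2 b2) v5" "adj m v5 (Pt z0 p0 b0)"
    and distinct: "distinct [Pt z0 p0 b0, v1, Pt z1 p1 b1, v3, Pt z2 p2 b2, v5]"
  shows "p0 \<noteq> p1"
proof
  assume p: "p0 = p1"
  then have z: "z0 = z1"
    using adj_common_line_same_cube[of m z0 p0 b0 v1 z1 b1] adj(1,2) adj_sym by auto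
  show False
  proof (cases "p2 = p1")
    case True
    then have "z2 = z1"
      using adj_common_line_same_cube[of m z2 p1 b2 v3 z1 b1] adj(3,4) adj_sym by auto
    then show False
      using distinct p z True by (cases b0; cases b1; cases b2) auto
  next
    case False
    have "adj m (Pt z1 p1 b1) v5"
      using adj(6) adj_sym adj_Pt_twin p z by metis
    then have "v3 = v5"
      using adj_two_common_lines[of m z1 p1 b1 v3 v5 z2 p2 b2] adj(3-5) adj_sym False by auto
    then show False
      using distinct by simp
  qed
qed

lemma no_adj_cycle6:
  assumes "adj m v0 v1" "adj m v1 v2" "adj m v2 v3" "adj m v3 v4" "adj m v4 v5" "adj m v5 v0"
    and "distinct [v0, v1, v2, v3, v4, v5]"
  shows False
proof -
  have no_cycle_from_Pt: False
    if adj: "adj m (Pt z0 p0 b0) u1" "adj m u1 u2" "adj m u2 u3" "adj m u3 u4" "adj m u4 u5"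
      "adj m u5 (Pt z0 p0 b0)"
    and distinct: "distinct [Pt z0 p0 b0, u1, u2, u3, u4, u5]" for z0 p0 b0 u1 u2 u3 u4 u5
  proof -
    obtain z1 p1 b1 where u2: "u2 = Pt z1 p1 b1"
      using adj(1,2) by (auto elim!: adj_PtE adj_LnE)
    obtain z2 p2 b2 where u4: "u4 = Pt z2 p2 b2"
      using adj(3,4) u2 by (auto elim!: adj_PtE adj_LnE)
    have "distinct [Pt z1 p1 b1, u3, Pt z2 p2 b2, u5, Pt z0 p0 b0, u1]"
      "distinct [Pt z2 p2 b2, u5, Pt z0 p0 b0, u1, Pt z1 p1 b1, u3]"
      using distinct u2 u4 by auto
    then have "p0 \<noteq> p1" "p1 \<noteq> p2" "p2 \<noteq> p0"
      using adj_cycle6_consecutive_words_differ[of m z0 p0 b0 u1 z1 p1 b1 u3 z2 p2 b2 u5]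
        adj_cycle6_consecutive_words_differ[of m z1 p1 b1 u3 z2 p2 b2 u5 z0 p0 b0 u1]
        adj_cycle6_consecutive_words_differ[of m z2 p2 b2 u5 z0 p0 b0 u1 z1 p1 b1 u3]
        adj distinct u2 u4 by blast+
    then have "u1 = u3"
      using adj_line_triangle[of m z0 p0 b0 u1 z1 p1 b1 u3 z2 p2 b2 u5] adj u2 u4 adj_sym by auto
    then show False
      using distinct by simp
  qed
  show False
  proof (cases v0)
    case (Pt z p b)
    then show False
      using no_cycle_from_Pt assms by blast
  next
    case (Ln y i w)
    then obtain z p b where "v1 = Pt z p b"
      using assms(1) by (auto elim: adj_LnE)
    then show False
      using no_cycle_from_Pt[of z p b v2 v3 v4 v5 v0] assms by auto
  qed
qed

fun shift_vert :: "real^3 \<Rightarrow> vert \<Rightarrow> vert" where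
  "shift_vert t (Pt z p b) = Pt (z + t) p b"
| "shift_vert t (Ln y i w) = Ln (y + t) i w"

lemma adj_shift_vert: "integer_vector t \<Longrightarrow> adj m (shift_vert t u) (shift_vert t v) = adj m u v"
  by (cases u; cases v)
    (auto simp: incident_def algebra_simps integer_vector_add dest: integer_vector_diff[of _ t])

section \<open>Connectivity of the incidence graph\<close>

lemma symp_adj: "symp (adj m)"
  using adj_sym by (blast intro: sympI)

lemma reach_sym: "(adj m)\<^sup>*\<^sup>* u v \<Longrightarrow> (adj m)\<^sup>*\<^sup>* v u"
  by (rule sympD[OF symp_rtranclp[OF symp_adj]])

lemma reach_update:
  assumes "integer_vector z" "word m p" "i < 2 * m" "c < m"
    and "cube_shift m p i = cube_shift m (p[i := c]) i"
  shows "(adj m)\<^sup>*\<^sup>* (Pt z p b) (Pt z (p[i := c]) b')"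
proof -
  have line: "line m i (p[i := 0])" "on_line p i (p[i := 0])"
    using line_through[OF assms(2,3)] by simp_all
  have "adj m (Pt z p b) (Ln (z + cube_shift m p i) i (p[i := 0]))"
    using assms line by (simp add: incident_def)
  moreover have "on_line (p[i := c]) i (p[i := 0])"
    unfolding on_line_def by (auto simp: nth_list_update)
  then have "adj m (Ln (z + cube_shift m p i) i (p[i := 0])) (Pt z (p[i := c]) b')"
    using assms line word_update by (simp add: incident_def)
  ultimately show ?thesis
    by (meson r_into_rtranclp rtranclp_trans)
qed

lemma cube_shift_nonzero_word:
  "3 < length p \<Longrightarrow> p ! 3 \<noteq> 0 \<Longrightarrow> cube_shift m p i = 0"
  by (auto simp: cube_shift_def zero_word_def)

(* Words with a nonzero coordinate 3 are not the zero word, so their other coordinates can be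
   changed one at a time without ever leaving the cube. *)
lemma reach_words_sharing_nonzero_coordinate:
  assumes "integer_vector z" "word m p" "word m q" "1 < m" "p ! 3 = q ! 3" "p ! 3 \<noteq> 0"
  shows "(adj m)\<^sup>*\<^sup>* (Pt z p b) (Pt z q b')"
  using assms(2,5,6)
proof (induction "card {j. j < 2 * m \<and> p ! j \<noteq> q ! j}" arbitrary: p b rule: less_induct)
  case less
  have len: "length p = 2 * m" "length q = 2 * m"
    using less.prems(1) assms(3) by (simp_all add: word_length)
  show ?case
  proof (cases "p = q")
    case True
    have "(adj m)\<^sup>*\<^sup>* (Pt z p b) (Pt z (p[3 := p ! 3]) b')"
      using assms(1,4) less.prems len cube_shift_nonzero_word word_nth_less[OF less.prems(1), of 3]
      by (intro reach_update) auto
    then show ?thesis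
      using True by simp
  next
    case False
    then obtain j where j: "j < 2 * m" "p ! j \<noteq> q ! j"
      using len nth_equalityI[of p q] by auto
    then have "j \<noteq> 3"
      using less.prems(2) by auto
    define p' where "p' = p[j := q ! j]"
    have "q ! j < m"
      using word_nth_less[OF assms(3) j(1)] .
    then have p': "word m p'" "p' ! 3 = q ! 3" "p' ! 3 \<noteq> 0"
      using less.prems j \<open>j \<noteq> 3\<close> word_update by (auto simp: p'_def)
    have "(adj m)\<^sup>*\<^sup>* (Pt z p b) (Pt z p' b)"
      unfolding p'_def
      using assms(1,4) less.prems j \<open>q ! j < m\<close> \<open>j \<noteq> 3\<close> len cube_shift_nonzero_word
      by (intro reach_update) auto
    moreover have "{k. k < 2 * m \<and> p' ! k \<noteq> q ! k} \<subset> {k. k < 2 * m \<and> p ! k \<noteq> q ! k}"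
      using j len by (auto simp: p'_def nth_list_update)
    then have "(adj m)\<^sup>*\<^sup>* (Pt z p' b) (Pt z q b')"
      using less.hyps[OF psubset_card_mono p'] by simp
    ultimately show ?thesis
      by (rule rtranclp_trans)
  qed
qed

lemma reach_zero_word_in_cube:
  assumes "integer_vector z" "word m p" "1 < m"
  shows "(adj m)\<^sup>*\<^sup>* (Pt z p b) (Pt z (zero_word m) False)"
proof -
  have three: "3 < 2 * m"
    using assms(3) by simp
  let ?e = "(zero_word m)[3 := 1]"
  have words: "word m (p[3 := 1])" "word m ?e"
    using assms word_update word_zero_word by simp_all
  have "(adj m)\<^sup>*\<^sup>* (Pt z p b) (Pt z (p[3 := 1]) False)"
    using assms three by (intro reach_update) (auto simp: cube_shift_def)
  also have "(adj m)\<^sup>*\<^sup>* \<dots> (Pt z ?e False)"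
    using assms words three word_length[OF assms(2)]
    by (intro reach_words_sharing_nonzero_coordinate) (auto simp: zero_word_def)
  also have "(adj m)\<^sup>*\<^sup>* \<dots> (Pt z (?e[3 := 0]) False)"
    using assms words(2) three by (intro reach_update) (auto simp: cube_shift_def)
  finally show ?thesis
    by (simp add: zero_word_update)
qed

lemma reach_neighbour_cube:
  assumes "integer_vector z" "k < 3" "1 < m"
  shows "(adj m)\<^sup>*\<^sup>* (Pt z (zero_word m) False) (Pt (z + dir k) (zero_word m) False)"
proof -
  have zero: "word m (zero_word m)" "line m k (zero_word m)" "on_line (zero_word m) k (zero_word m)"
    using assms word_zero_word line_through[of m "zero_word m" k] zero_word_update by auto
  define q where "q = (zero_word m)[k := 1]"
  have "q ! k = 1" "zero_word m ! k = 0"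
    using assms by (simp_all add: q_def zero_word_def)
  then have q: "word m q" "q \<noteq> zero_word m" "on_line q k (zero_word m)"
    using zero assms unfolding q_def by (auto simp: word_update on_line_update)
  have "adj m (Pt z (zero_word m) False) (Ln (z + dir k) k (zero_word m))"
    using assms zero by (simp add: incident_def cube_shift_def)
  moreover have "adj m (Ln (z + dir k) k (zero_word m)) (Pt (z + dir k) q False)"
    using assms zero q by (simp add: incident_def cube_shift_def integer_vector_add integer_vector_dir)
  moreover have "(adj m)\<^sup>*\<^sup>* (Pt (z + dir k) q False) (Pt (z + dir k) (zero_word m) False)"
    using assms q by (intro reach_zero_word_in_cube) (simp_all add: integer_vector_add integer_vector_dir)
  ultimately show ?thesis
    by (meson converse_rtranclp_into_rtranclp)
qed

lemma reach_along_axis: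
  assumes "integer_vector z" "k < 3" "1 < m"
  shows "(adj m)\<^sup>*\<^sup>* (Pt z (zero_word m) False) (Pt (z + of_int a *\<^sub>R dir k) (zero_word m) False)"
proof (induction a rule: int_induct[where k = 0])
  case base
  then show ?case
    by simp
next
  case (step1 a)
  have "integer_vector (z + of_int a *\<^sub>R dir k)"
    by (rule integer_vector_add[OF assms(1) integer_vector_of_int_scaleR[OF integer_vector_dir]])
  then show ?case
    using step1 reach_neighbour_cube[OF _ assms(2,3)] rtranclp_trans
    by (fastforce simp: algebra_simps)
next
  case (step2 a)
  have "integer_vector (z + of_int (a - 1) *\<^sub>R dir k)"
    by (rule integer_vector_add[OF assms(1) integer_vector_of_int_scaleR[OF integer_vector_dir]])
  then show ?case
    using step2 reach_sym[OF reach_neighbour_cube[OF _ assms(2,3)]] rtranclp_trans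
    by (fastforce simp: algebra_simps)
qed

lemma reach_origin:
  assumes "integer_vector z" "1 < m"
  shows "(adj m)\<^sup>*\<^sup>* (Pt 0 (zero_word m) False) (Pt z (zero_word m) False)"
proof -
  obtain a1 a2 a3 where "z $ 1 = of_int a1" "z $ 2 = of_int a2" "z $ 3 = of_int a3"
    using assms(1) unfolding integer_vector_def by (meson Ints_cases)
  then have z: "z = 0 + of_int a1 *\<^sub>R dir 0 + of_int a2 *\<^sub>R dir 1 + of_int a3 *\<^sub>R dir 2"
    by (simp add: vec_eq_iff forall_3 dir_def)
  have int: "integer_vector (0 + of_int a1 *\<^sub>R dir 0)"
    "integer_vector (0 + of_int a1 *\<^sub>R dir 0 + of_int a2 *\<^sub>R dir 1)"
    by (simp_all add: integer_vector_add integer_vector_of_int_scaleR integer_vector_dir integer_vector_zero)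
  have "(adj m)\<^sup>*\<^sup>* (Pt 0 (zero_word m) False) (Pt (0 + of_int a1 *\<^sub>R dir 0) (zero_word m) False)"
    by (rule reach_along_axis) (use assms in \<open>simp_all add: integer_vector_zero\<close>)
  also have "(adj m)\<^sup>*\<^sup>* \<dots> (Pt (0 + of_int a1 *\<^sub>R dir 0 + of_int a2 *\<^sub>R dir 1) (zero_word m) False)"
    by (rule reach_along_axis) (use assms int in simp_all)
  also have "(adj m)\<^sup>*\<^sup>* \<dots> (Pt z (zero_word m) False)"
    unfolding z by (rule reach_along_axis) (use assms int in simp_all)
  finally show ?thesis .
qed

lemma valid_reach_origin:
  assumes "valid m u" "1 < m"
  shows "(adj m)\<^sup>*\<^sup>* (Pt 0 (zero_word m) False) u"
proof (cases u)
  case (Pt z p b)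
  then show ?thesis
    using assms reach_origin[of z m] reach_sym[OF reach_zero_word_in_cube[of z m p b]]
    by (auto intro: rtranclp_trans)
next
  case (Ln y i w)
  define z where "z = y - cube_shift m w i"
  have "integer_vector z" "word m w"
    using assms Ln by (simp_all add: z_def line_def integer_vector_diff integer_vector_cube_shift)
  moreover have "adj m (Pt z w False) u"
    using assms Ln calculation by (simp add: incident_def z_def on_line_def)
  ultimately show ?thesis
    using reach_origin[of z m] reach_sym[OF reach_zero_word_in_cube[of z m w False]] assms(2)
    by (meson rtranclp.rtrancl_into_rtrancl rtranclp_trans)
qed

section \<open>The lattice in space\<close>

(* Injective codes keep all sites distinct; the lines through the zero word in directions i < 3,
   which carry the edges between cubes, get the parameters tau i > 1/8, all other lines
   parameters at most 1/8. *)
definition x_param :: "nat list \<Rightarrow> bool \<Rightarrow> real" where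
  "x_param p b = 1 / (4 + real (to_nat (p, b)))"

definition y_param :: "nat \<Rightarrow> nat \<Rightarrow> nat list \<Rightarrow> real" where
  "y_param m i w = (if i < 3 \<and> w = zero_word m then tau i else 1 / (8 + real (to_nat (i, w))))"

fun place :: "nat \<Rightarrow> vert \<Rightarrow> real^3" where
  "place m (Pt z p b) = z + x_site (x_param p b)"
| "place m (Ln y i w) = y + y_site (y_param m i w)"

lemma x_param_bounds: "0 < x_param p b" "x_param p b \<le> 1/4"
  unfolding x_param_def by (auto simp: field_simps)

lemma y_param_bounds: "0 < y_param m i w" "y_param m i w \<le> 5/16"
  unfolding y_param_def tau_def by (auto simp: field_simps)

lemma x_param_inj: "x_param p b = x_param p' b' \<Longrightarrow> p = p' \<and> b = b'"
  unfolding x_param_def by (auto simp: field_simps dest: injD[OF inj_to_nat])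

lemma y_param_gt_eighth_iff: "1/8 < y_param m i w \<longleftrightarrow> i < 3 \<and> w = zero_word m"
proof -
  have "1 / (8 + real k) \<le> 1/8" for k :: nat
    by (simp add: field_simps)
  then show ?thesis
    by (auto simp: y_param_def tau_def simp del: of_nat_add)
qed

lemma y_param_inj:
  assumes "y_param m i w = y_param m i' w'"
  shows "i = i' \<and> w = w'"
proof (cases "i < 3 \<and> w = zero_word m")
  case True
  then have "i' < 3 \<and> w' = zero_word m"
    using assms y_param_gt_eighth_iff by metis
  then show ?thesis
    using True assms by (simp add: y_param_def tau_def)
next
  case False
  then have "\<not> (i' < 3 \<and> w' = zero_word m)"
    using assms y_param_gt_eighth_iff by metis
  then show ?thesis
    using False assms by (auto simp: y_param_def field_simps dest: injD[OF inj_to_nat])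
qed

lemma coord_sum_place:
  "coord_sum (place m (Pt z p b)) = coord_sum z + 3/2"
  "coord_sum (place m (Ln y i w)) = coord_sum y + 1"
  by (simp_all add: coord_sum_def x_site_def y_site_def)

lemma place_Pt_neq_place_Ln:
  assumes "integer_vector z" "integer_vector y"
  shows "place m (Pt z p b) \<noteq> place m (Ln y i w)"
proof
  assume "place m (Pt z p b) = place m (Ln y i w)"
  then have "coord_sum z + 3/2 = coord_sum y + 1"
    by (metis coord_sum_place)
  then have "1/2 = coord_sum y - coord_sum z"
    by linarith
  moreover have "coord_sum y - coord_sum z \<in> \<int>"
    using assms by (simp add: integer_vector_coord_sum)
  ultimately show False
    using half_not_Ints by metis
qed

lemma place_inj:
  assumes "valid m u" "valid m v" "place m u = place m v"
  shows "u = v"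
  using assms
proof (cases u; cases v)
  fix z p b z' p' b' assume "u = Pt z p b" "v = Pt z' p' b'"
  then show ?thesis
    using assms x_site_eq[of z z' "x_param p b" "x_param p' b'"] x_param_bounds x_param_inj[of p b p' b']
    by auto
next
  fix y i w y' i' w' assume "u = Ln y i w" "v = Ln y' i' w'"
  then show ?thesis
    using assms y_site_eq[of y y' "y_param m i w" "y_param m i' w'"] y_param_bounds
      y_param_inj[of m i w i' w'] by auto
qed (metis assms place_Pt_neq_place_Ln valid.simps)+

definition lat_vertices :: "nat \<Rightarrow> (real^3) set" where
  "lat_vertices m = place m ` {u. valid m u}"

definition lat_edge :: "nat \<Rightarrow> real^3 \<Rightarrow> real^3 \<Rightarrow> bool" where
  "lat_edge m x y \<longleftrightarrow> (\<exists>u v. adj m u v \<and> x = place m u \<and> y = place m v)"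

lemma lat_vertexE:
  assumes "x \<in> lat_vertices m"
  obtains u where "valid m u" "x = place m u"
  using assms unfolding lat_vertices_def by blast

lemma lat_edgeE:
  assumes "lat_edge m x y"
  obtains u v where "adj m u v" "x = place m u" "y = place m v"
  using assms unfolding lat_edge_def by blast

lemma lat_edge_place:
  assumes "valid m u" "valid m v"
  shows "lat_edge m (place m u) (place m v) \<longleftrightarrow> adj m u v"
  using assms place_inj adj_valid unfolding lat_edge_def by metis

lemma lat_edge_sym: "lat_edge m x y \<Longrightarrow> lat_edge m y x"
  unfolding lat_edge_def using adj_sym by blast

lemma lat_edge_in_vertices: "lat_edge m x y \<Longrightarrow> x \<in> lat_vertices m \<and> y \<in> lat_vertices m"
  unfolding lat_edge_def lat_vertices_def by (auto dest: adj_valid)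

lemma lat_edge_irrefl: "\<not> lat_edge m x x"
  unfolding lat_edge_def using adj_irrefl adj_valid place_inj by metis

definition lift :: "nat \<Rightarrow> real^3 \<Rightarrow> vert" where
  "lift m = inv_into {u. valid m u} (place m)"

lemma lat_edge_lift:
  assumes "lat_edge m x y"
  shows "adj m (lift m x) (lift m y)" "place m (lift m x) = x" "place m (lift m y) = y"
proof -
  obtain u v where uv: "adj m u v" "x = place m u" "y = place m v"
    using assms by (rule lat_edgeE)
  have "inj_on (place m) {u. valid m u}"
    using place_inj by (blast intro: inj_onI)
  then have "lift m x = u" "lift m y = v"
    using uv adj_valid by (auto simp: lift_def)
  then show "adj m (lift m x) (lift m y)" "place m (lift m x) = x" "place m (lift m y) = y"
    using uv by simp_all
qed

lemma simple_graph_lat: "simple_graph (lat_vertices m) (lat_edge m)"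
  unfolding simple_graph_def
  using lat_edge_in_vertices lat_edge_sym lat_edge_irrefl by metis

lemma bipartite_graph_lat: "bipartite_graph (lat_vertices m) (lat_edge m)"
  unfolding bipartite_graph_def
proof (intro exI allI impI)
  fix x y assume "lat_edge m x y"
  then have "adj m (lift m x) (lift m y)"
    by (rule lat_edge_lift)
  then show "x \<in> {x. \<exists>z p b. lift m x = Pt z p b} \<longleftrightarrow> y \<notin> {x. \<exists>z p b. lift m x = Pt z p b}"
    by (cases "lift m x"; cases "lift m y") auto
qed

lemma infinite_lat_vertices:
  assumes "0 < m"
  shows "infinite (lat_vertices m)"
proof
  define f where "f k = place m (Pt (of_int k *\<^sub>R dir 0) (zero_word m) False)" for k :: int
  have valid: "valid m (Pt (of_int k *\<^sub>R dir 0) (zero_word m) False)" for k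
    using assms by (simp add: integer_vector_of_int_scaleR integer_vector_dir word_zero_word)
  have "inj f"
  proof
    fix k l assume "f k = f l"
    then have "(of_int k *\<^sub>R dir 0 :: real^3) = of_int l *\<^sub>R dir 0"
      unfolding f_def using place_inj[OF valid valid] by simp
    then show "k = l"
      by (auto simp: dir_def vec_eq_iff forall_3)
  qed
  moreover assume "finite (lat_vertices m)"
  moreover have "range f \<subseteq> lat_vertices m"
    unfolding f_def lat_vertices_def using valid by blast
  ultimately show False
    using finite_subset infinite_UNIV_int finite_imageD by metis
qed

lemma lat_neighbours:
  assumes "valid m u"
  shows "{x. lat_edge m (place m u) x} = place m ` {v. adj m u v}"
  using assms unfolding lat_edge_def by (auto dest: adj_valid place_inj)

lemma card_lat_neighbours:
  assumes "x \<in> lat_vertices m"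
  shows "finite {z. lat_edge m x z} \<and> card {z. lat_edge m x z} = 2 * m"
proof -
  obtain u where u: "valid m u" "x = place m u"
    using assms by (rule lat_vertexE)
  have "inj_on (place m) {v. adj m u v}"
    by (auto intro!: inj_onI dest: adj_valid place_inj)
  then show ?thesis
    using card_adj_neighbours[OF u(1)] lat_neighbours[OF u(1)] u(2) by (simp add: card_image)
qed

lemma finite_lat_neighbours: "finite {y. lat_edge m x y}"
proof (cases "x \<in> lat_vertices m")
  case False
  then have "{y. lat_edge m x y} = {}"
    using lat_edge_in_vertices by blast
  then show ?thesis
    by simp
qed (simp add: card_lat_neighbours)

lemma place_shift_vert: "place m (shift_vert t u) = place m u + t"
  by (cases u) (simp_all add: algebra_simps)

lemma lat_edge_translate_imp:
  assumes "integer_vector t" "lat_edge m x y"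
  shows "lat_edge m (x + t) (y + t)"
proof -
  obtain u v where "adj m u v" "x = place m u" "y = place m v"
    using assms(2) by (rule lat_edgeE)
  then show ?thesis
    unfolding lat_edge_def using adj_shift_vert[OF assms(1)] place_shift_vert by metis
qed

lemma lat_edge_translate:
  assumes "integer_vector t"
  shows "lat_edge m x y \<longleftrightarrow> lat_edge m (x + t) (y + t)"
  using lat_edge_translate_imp[OF assms] lat_edge_translate_imp[OF integer_vector_uminus[OF assms]]
  by fastforce

lemma lat_vertices_translate_imp:
  assumes "integer_vector t" "x \<in> lat_vertices m"
  shows "x + t \<in> lat_vertices m"
proof -
  obtain u where "valid m u" "x = place m u"
    using assms(2) by (rule lat_vertexE)
  moreover have "valid m (shift_vert t u)"
    using calculation(1) assms(1)
    by (cases u) (auto simp: integer_vector_add)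
  ultimately show ?thesis
    unfolding lat_vertices_def using place_shift_vert by (metis imageI mem_Collect_eq)
qed

lemma lat_vertices_translate:
  assumes "integer_vector t"
  shows "x \<in> lat_vertices m \<longleftrightarrow> x + t \<in> lat_vertices m"
  using lat_vertices_translate_imp[OF assms] lat_vertices_translate_imp[OF integer_vector_uminus[OF assms]]
  by fastforce

fun cube_corner :: "vert \<Rightarrow> real^3" where
  "cube_corner (Pt z _ _) = z"
| "cube_corner (Ln y _ _) = y"

fun site_offset :: "nat \<Rightarrow> vert \<Rightarrow> real^3" where
  "site_offset m (Pt _ p b) = x_site (x_param p b)"
| "site_offset m (Ln _ i w) = y_site (y_param m i w)"

lemma place_eq_corner_plus_offset: "place m u = cube_corner u + site_offset m u"
  by (cases u) simp_all

lemma site_offset_in_unit_interval: "0 < site_offset m u $ j \<and> site_offset m u $ j < 1"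
proof (cases u)
  case (Pt z p b)
  then show ?thesis
    using x_param_bounds[of p b] exhaust_3[of j] by (auto simp: x_site_def)
next
  case (Ln y i w)
  then show ?thesis
    using y_param_bounds[of m i w] exhaust_3[of j] by (auto simp: y_site_def)
qed

lemma valid_cube_corner: "valid m u \<Longrightarrow> integer_vector (cube_corner u)"
  by (cases u) auto

lemma cube_of_place:
  assumes "valid m u"
  shows "cube_of (place m u) = (\<chi> j. \<lfloor>cube_corner u $ j\<rfloor>)"
proof -
  have "\<lfloor>cube_corner u $ j + site_offset m u $ j\<rfloor> = \<lfloor>cube_corner u $ j\<rfloor>" for j
    using valid_cube_corner[OF assms] site_offset_in_unit_interval[of m u j]
    by (auto simp: integer_vector_def floor_eq_iff elim!: Ints_cases)
  then show ?thesis
    by (simp add: cube_of_def place_eq_corner_plus_offset)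
qed

lemma place_not_Ints:
  assumes "valid m u"
  shows "place m u $ j \<notin> \<int>"
proof
  assume "place m u $ j \<in> \<int>"
  moreover have "cube_corner u $ j \<in> \<int>"
    using valid_cube_corner[OF assms] by (simp add: integer_vector_def)
  ultimately have "site_offset m u $ j \<in> \<int>"
    unfolding place_eq_corner_plus_offset by (metis Ints_diff add_diff_cancel_left' vector_add_component)
  then show False
    using site_offset_in_unit_interval[of m u j] by (auto elim!: Ints_cases)
qed

lemma finite_lat_vertices_in_cube: "finite {v \<in> lat_vertices m. cube_of v = c}"
proof -
  define z :: "real^3" where "z = (\<chi> j. of_int (c $ j))"
  define W where "W = {p. set p \<subseteq> {..<m} \<and> length p = 2 * m}"
  have "finite W"
    unfolding W_def by (rule finite_lists_length_eq) simp
  have W: "word m p \<longleftrightarrow> p \<in> W" for p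
    unfolding word_def W_def by auto
  let ?S = "(\<lambda>(p, b). Pt z p b) ` (W \<times> UNIV) \<union> (\<lambda>(i, w). Ln z i w) ` ({..<2 * m} \<times> W)"
  have "{v \<in> lat_vertices m. cube_of v = c} \<subseteq> place m ` ?S"
  proof
    fix v assume "v \<in> {v \<in> lat_vertices m. cube_of v = c}"
    then obtain u where u: "valid m u" "v = place m u" "cube_of v = c"
      by (auto elim: lat_vertexE)
    have "cube_corner u $ j = of_int (c $ j)" for j
    proof -
      have "c = (\<chi> j. \<lfloor>cube_corner u $ j\<rfloor>)"
        using cube_of_place[OF u(1)] u(2,3) by simp
      then have "c $ j = \<lfloor>cube_corner u $ j\<rfloor>"
        by simp
      moreover have "cube_corner u $ j \<in> \<int>"
        using valid_cube_corner[OF u(1)] by (simp add: integer_vector_def)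
      ultimately show ?thesis
        by (auto elim!: Ints_cases)
    qed
    then have "cube_corner u = z"
      by (simp add: z_def vec_eq_iff)
    then have "u \<in> ?S"
      using u(1) by (cases u) (auto simp: W line_def)
    then show "v \<in> place m ` ?S"
      using u(2) by blast
  qed
  moreover have "finite ?S"
    using \<open>finite W\<close> by simp
  ultimately show ?thesis
    using finite_subset by blast
qed

definition neighbour_cubes :: "int^3 \<Rightarrow> int^3 \<Rightarrow> bool" where
  "neighbour_cubes c d \<longleftrightarrow> c = d \<or> (\<exists>i. \<bar>c $ i - d $ i\<bar> = 1 \<and> (\<forall>j. j \<noteq> i \<longrightarrow> c $ j = d $ j))"

lemma neighbour_cubes_sym: "neighbour_cubes c d \<Longrightarrow> neighbour_cubes d c"
  unfolding neighbour_cubes_def by (metis abs_minus_commute)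

lemma neighbour_cubes_floor_add_dir:
  assumes "i < 3"
  shows "neighbour_cubes (\<chi> j. \<lfloor>z $ j\<rfloor>) (\<chi> j. \<lfloor>(z + dir i) $ j\<rfloor>)"
proof -
  consider "i = 0" | "i = 1" | "i = 2"
    using assms by linarith
  then show ?thesis
  proof cases
    case 1
    then show ?thesis
      unfolding neighbour_cubes_def by (intro disjI2 exI[of _ 1]) (auto simp: dir_def forall_3)
  next
    case 2
    then show ?thesis
      unfolding neighbour_cubes_def by (intro disjI2 exI[of _ 2]) (auto simp: dir_def forall_3)
  next
    case 3
    then show ?thesis
      unfolding neighbour_cubes_def by (intro disjI2 exI[of _ 3]) (auto simp: dir_def forall_3)
  qed
qed

lemma incident_neighbour_cubes:
  assumes "incident m z p y i w"
  shows "neighbour_cubes (cube_of (place m (Pt z p b))) (cube_of (place m (Ln y i w)))"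
proof -
  have valid: "valid m (Pt z p b)" "valid m (Ln y i w)"
    using adj_valid[of m "Pt z p b" "Ln y i w"] assms by auto
  have "cube_of (place m (Pt z p b)) = (\<chi> j. \<lfloor>z $ j\<rfloor>)"
    "cube_of (place m (Ln y i w)) = (\<chi> j. \<lfloor>(z + cube_shift m p i) $ j\<rfloor>)"
    using cube_of_place[OF valid(1)] cube_of_place[OF valid(2)] assms by (simp_all add: incident_def)
  then show ?thesis
    using neighbour_cubes_floor_add_dir[of i z]
    by (cases "i < 3 \<and> p = zero_word m") (auto simp: cube_shift_def neighbour_cubes_def)
qed

lemma lat_edge_neighbour_cubes:
  assumes "lat_edge m x y"
  shows "neighbour_cubes (cube_of x) (cube_of y)"
proof -
  obtain u v where uv: "adj m u v" "x = place m u" "y = place m v"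
    using assms by (rule lat_edgeE)
  show ?thesis
  proof (cases u)
    case (Pt z p b)
    then obtain y' i w where "v = Ln y' i w" "incident m z p y' i w"
      using uv(1) by (auto elim: adj_PtE)
    then show ?thesis
      using uv Pt incident_neighbour_cubes by blast
  next
    case (Ln y' i w)
    then obtain z p b where "v = Pt z p b" "incident m z p y' i w"
      using uv(1) by (auto elim: adj_LnE)
    then show ?thesis
      using uv Ln incident_neighbour_cubes neighbour_cubes_sym by blast
  qed
qed

lemma incident_site_edge:
  assumes "incident m z p y i w"
  shows "site_edge z (x_param p b) (cube_shift m p i) (y_param m i w)"
    "place m (Ln y i w) = z + cube_shift m p i + y_site (y_param m i w)"
proof -
  have "w = p[i := 0]"
    using assms on_line_imp_eq_update(1) unfolding incident_def by blast
  then have "cube_shift m p i \<noteq> 0 \<Longrightarrow> y_param m i w = tau i"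
    by (auto simp: cube_shift_def y_param_def zero_word_update split: if_splits)
  then show "site_edge z (x_param p b) (cube_shift m p i) (y_param m i w)"
    using assms x_param_bounds y_param_bounds
    by (auto simp: site_edge_def incident_def cube_shift_def)
  show "place m (Ln y i w) = z + cube_shift m p i + y_site (y_param m i w)"
    using assms by (simp add: incident_def)
qed

lemma lat_edge_site_edge:
  assumes "lat_edge m a c"
  obtains z s k t where "site_edge z s k t" "{a, c} = {z + x_site s, z + k + y_site t}"
proof -
  obtain u v where uv: "adj m u v" "a = place m u" "c = place m v"
    using assms by (rule lat_edgeE)
  show thesis
  proof (cases u)
    case (Pt z p b)
    then obtain y i w where "v = Ln y i w" "incident m z p y i w"
      using uv(1) by (auto elim: adj_PtE)
    then show thesis
      using that incident_site_edge(1)[of m z p y i w b] incident_site_edge(2)[of m z p y i w] uv Pt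
      by auto
  next
    case (Ln y i w)
    then obtain z p b where "v = Pt z p b" "incident m z p y i w"
      using uv(1) by (auto elim: adj_LnE)
    then show thesis
      using that incident_site_edge(1)[of m z p y i w b] incident_site_edge(2)[of m z p y i w] uv Ln
      by (auto simp: insert_commute)
  qed
qed

lemma lat_edges_meet_at_ends:
  assumes "lat_edge m a b" "lat_edge m c d" "{a, b} \<noteq> {c, d}"
  shows "closed_segment a b \<inter> closed_segment c d \<subseteq> {a, b} \<inter> {c, d}"
proof
  fix P assume P: "P \<in> closed_segment a b \<inter> closed_segment c d"
  obtain z1 s1 k1 t1 where e1: "site_edge z1 s1 k1 t1" "{a, b} = {z1 + x_site s1, z1 + k1 + y_site t1}"
    using assms(1) by (rule lat_edge_site_edge)
  obtain z2 s2 k2 t2 where e2: "site_edge z2 s2 k2 t2" "{c, d} = {z2 + x_site s2, z2 + k2 + y_site t2}"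
    using assms(2) by (rule lat_edge_site_edge)
  have seg: "closed_segment a b = closed_segment (z1 + x_site s1) (z1 + k1 + y_site t1)"
    "closed_segment c d = closed_segment (z2 + x_site s2) (z2 + k2 + y_site t2)"
    using e1(2) e2(2) by (metis closed_segment_commute doubleton_eq_iff)+
  have "(P = z1 + x_site s1 \<and> P = z2 + x_site s2) \<or> (P = z1 + k1 + y_site t1 \<and> P = z2 + k2 + y_site t2) \<or>
    (z1 = z2 \<and> s1 = s2 \<and> k1 = k2 \<and> t1 = t2)"
    by (rule site_edge_segments_meet_at_ends[OF e1(1) e2(1)]) (use P seg in auto)
  then show "P \<in> {a, b} \<inter> {c, d}"
    using e1(2) e2(2) assms(3) by auto
qed

lemma reach_imp_lat_reach: "(adj m)\<^sup>*\<^sup>* u v \<Longrightarrow> (lat_edge m)\<^sup>*\<^sup>* (place m u) (place m v)"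
proof (induction rule: rtranclp_induct)
  case (step v w)
  then have "lat_edge m (place m v) (place m w)"
    unfolding lat_edge_def by blast
  with step.IH show ?case
    by (rule rtranclp.rtrancl_into_rtrancl)
qed simp

lemma connected_graph_lat:
  assumes "1 < m"
  shows "connected_graph (lat_vertices m) (lat_edge m)"
  unfolding connected_graph_def
proof (intro ballI)
  fix x y assume "x \<in> lat_vertices m" "y \<in> lat_vertices m"
  then obtain u v where "valid m u" "x = place m u" "valid m v" "y = place m v"
    by (metis lat_vertexE)
  then show "(lat_edge m)\<^sup>*\<^sup>* x y"
    using valid_reach_origin assms reach_sym reach_imp_lat_reach by (metis rtranclp_trans)
qed

lemma cubic_lattice_lat:
  assumes "1 < m"
  shows "cubic_lattice (lat_vertices m) (lat_edge m)"
  unfolding cubic_lattice_def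
proof (intro conjI allI impI ballI)
  show "simple_graph (lat_vertices m) (lat_edge m)"
    by (rule simple_graph_lat)
  show "connected_graph (lat_vertices m) (lat_edge m)"
    using assms by (rule connected_graph_lat)
  show "infinite (lat_vertices m)"
    using assms by (intro infinite_lat_vertices) simp
  show "closed_segment a b \<inter> closed_segment c d \<subseteq> {a, b} \<inter> {c, d}"
    if "lat_edge m a b \<and> lat_edge m c d \<and> {a, b} \<noteq> {c, d}" for a b c d
    using that lat_edges_meet_at_ends by blast
  show "x \<in> lat_vertices m \<longleftrightarrow> x + t \<in> lat_vertices m" if "integer_vector t" for t x
    using that by (rule lat_vertices_translate)
  show "lat_edge m x y \<longleftrightarrow> lat_edge m (x + t) (y + t)" if "integer_vector t" for t x y
    using that by (rule lat_edge_translate)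
  show "v $ i \<notin> \<int>" if "v \<in> lat_vertices m" for v i
    using that place_not_Ints by (auto elim: lat_vertexE)
  show "finite {v \<in> lat_vertices m. cube_of v = z}" for z
    by (rule finite_lat_vertices_in_cube)
  show "cube_of x = cube_of y \<or> (\<exists>i. \<bar>cube_of x $ i - cube_of y $ i\<bar> = 1 \<and>
      (\<forall>j. j \<noteq> i \<longrightarrow> cube_of x $ j = cube_of y $ j))" if "lat_edge m x y" for x y
    using lat_edge_neighbour_cubes[OF that] unfolding neighbour_cubes_def .
qed

section \<open>Cycles of the lattice\<close>

lemma lat_neighbours_twin:
  assumes "valid m (Pt z p b)"
  shows "{x. lat_edge m (place m (Pt z p b)) x} = {x. lat_edge m (place m (Pt z p b')) x}"
proof -
  have "{v. adj m (Pt z p b) v} = {v. adj m (Pt z p b') v}"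
    using adj_Pt_twin by blast
  then show ?thesis
    using assms lat_neighbours[of m "Pt z p b"] lat_neighbours[of m "Pt z p b'"] by simp
qed

lemma lat_cycle4_twins:
  assumes "distinct [a, b, c, d]" "lat_edge m a b" "lat_edge m b c" "lat_edge m c d" "lat_edge m d a"
  shows "{y. lat_edge m a y} = {y. lat_edge m c y} \<or> {y. lat_edge m b y} = {y. lat_edge m d y}"
proof -
  note lifted = lat_edge_lift[OF assms(2)] lat_edge_lift[OF assms(3)] lat_edge_lift[OF assms(4)]
    lat_edge_lift[OF assms(5)]
  have "lift m a \<noteq> lift m c" "lift m b \<noteq> lift m d"
    using assms(1) lifted by (auto dest: arg_cong[of _ _ "place m"])
  show ?thesis
  proof (cases "lift m a")
    case (Pt z p b0)
    then obtain b' where "lift m c = Pt z p b'"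
      using adj_cycle4_twins[of m z p b0 "lift m b" "lift m c" "lift m d"] lifted
        \<open>lift m b \<noteq> lift m d\<close> by metis
    then show ?thesis
      using lat_neighbours_twin[of m z p b0 b'] adj_valid lifted Pt by metis
  next
    case (Ln y i w)
    then obtain z p b0 where b: "lift m b = Pt z p b0"
      using lifted by (auto elim: adj_LnE)
    then obtain b' where "lift m d = Pt z p b'"
      using adj_cycle4_twins[of m z p b0 "lift m c" "lift m d" "lift m a"] lifted
        \<open>lift m a \<noteq> lift m c\<close> by metis
    then show ?thesis
      using lat_neighbours_twin[of m z p b0 b'] adj_valid lifted b by metis
  qed
qed

lemma lat_no_cycle6: "cycle_subgraphs (lat_edge m) 6 = {}"
proof (rule ccontr)
  assume "cycle_subgraphs (lat_edge m) 6 \<noteq> {}"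
  then obtain H where "H \<in> cycle_subgraphs (lat_edge m) 6"
    by blast
  then obtain x0 x1 x2 x3 x4 x5 where distinct: "distinct [x0, x1, x2, x3, x4, x5]"
    and edges: "lat_edge m x0 x1" "lat_edge m x1 x2" "lat_edge m x2 x3" "lat_edge m x3 x4"
      "lat_edge m x4 x5" "lat_edge m x5 x0"
    by (rule cycle_subgraphs_6E)
  note lifted = lat_edge_lift[OF edges(1)] lat_edge_lift[OF edges(2)] lat_edge_lift[OF edges(3)]
    lat_edge_lift[OF edges(4)] lat_edge_lift[OF edges(5)] lat_edge_lift[OF edges(6)]
  have "distinct (map (place m) [lift m x0, lift m x1, lift m x2, lift m x3, lift m x4, lift m x5])"
    using distinct lifted by simp
  then have "distinct [lift m x0, lift m x1, lift m x2, lift m x3, lift m x4, lift m x5]"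
    by (simp only: distinct_map)
  then show False
    using no_adj_cycle6 lifted by blast
qed

definition origin_vertex :: "nat \<Rightarrow> real^3" where
  "origin_vertex m = place m (Pt 0 (zero_word m) False)"

lemma origin_vertex_in_reps:
  assumes "0 < m"
  shows "origin_vertex m \<in> reps (lat_vertices m)"
proof -
  have valid: "valid m (Pt 0 (zero_word m) False)"
    using assms by (simp add: word_zero_word integer_vector_zero)
  then have "cube_of (origin_vertex m) = 0"
    unfolding origin_vertex_def cube_of_place[OF valid] by (simp add: vec_eq_iff)
  moreover have "origin_vertex m \<in> lat_vertices m"
    unfolding lat_vertices_def origin_vertex_def using valid by blast
  ultimately show ?thesis
    by (simp add: reps_def)
qed

lemma cycle4_at_origin_vertex:
  assumes "2 < m"
  shows "\<exists>H \<in> cycle_subgraphs (lat_edge m) 4. origin_vertex m \<in> \<Union>H"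
proof -
  let ?a = "Pt 0 (zero_word m) False" and ?b = "Ln 0 3 (zero_word m)"
  let ?c = "Pt 0 (zero_word m) True" and ?d = "Ln 0 4 (zero_word m)"
  have adj_zero: "adj m (Pt 0 (zero_word m) b) (Ln 0 k (zero_word m))" if "3 \<le> k" "k < 2 * m" for b k
    using assms that by (simp add: incident_def word_zero_word line_def on_line_def cube_shift_def
        integer_vector_zero) (simp add: zero_word_def)
  have adj: "adj m ?a ?b" "adj m ?b ?c" "adj m ?c ?d" "adj m ?d ?a"
    using adj_zero[of 3] adj_zero[of 4] assms adj_sym by auto
  then have valid: "valid m ?a" "valid m ?b" "valid m ?c" "valid m ?d"
    using adj_valid by blast+
  have "distinct [place m ?a, place m ?b, place m ?c, place m ?d]"
    using place_inj[OF valid(1) valid(2)] place_inj[OF valid(1) valid(3)] place_inj[OF valid(1) valid(4)]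
      place_inj[OF valid(2) valid(3)] place_inj[OF valid(2) valid(4)] place_inj[OF valid(3) valid(4)]
    by auto
  moreover have "lat_edge m (place m ?a) (place m ?b)" "lat_edge m (place m ?b) (place m ?c)"
    "lat_edge m (place m ?c) (place m ?d)" "lat_edge m (place m ?d) (place m ?a)"
    using adj valid lat_edge_place by blast+
  ultimately have "cycle4_edges (place m ?a) (place m ?b) (place m ?c) (place m ?d) \<in> cycle_subgraphs (lat_edge m) 4"
    unfolding cycle_subgraphs_4_iff by blast
  then show ?thesis
    unfolding origin_vertex_def by (rule bexI[rotated]) (simp add: Union_cycle4_edges del: place.simps)
qed

lemma copies_at_cycle4_origin_vertex_pos:
  assumes "2 < m"
  shows "0 < copies_at (cycle_subgraphs (lat_edge m) 4) (origin_vertex m)"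
proof -
  have "finite {H \<in> cycle_subgraphs (lat_edge m) 4. origin_vertex m \<in> \<Union>H}"
    by (rule finite_cycle4_copies_at) (simp_all add: lat_edge_sym finite_lat_neighbours)
  then show ?thesis
    using cycle4_at_origin_vertex[OF assms] by (auto simp: copies_at_def card_gt_0_iff)
qed

lemma lat_theta222_copies_ge_cycle4_copies:
  "(2 * m - 2) * copies_at (cycle_subgraphs (lat_edge m) 4) v \<le> 3 * copies_at (theta222_subgraphs (lat_edge m)) v"
  by (rule theta222_copies_ge_cycle4_copies)
    (use lat_edge_sym lat_edge_irrefl finite_lat_neighbours card_lat_neighbours lat_edge_in_vertices
      lat_cycle4_twins in blast)+

theorem mainTheorem1:
  fixes \<kappa> :: real
  shows "\<exists>(V :: (real^3) set) (E :: real^3 \<Rightarrow> real^3 \<Rightarrow> bool).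
           cubic_lattice V E \<and> regular_graph V E \<and> bipartite_graph V E \<and>
           cycle_subgraphs E 6 = {} \<and> cycle_subgraphs E 4 \<noteq> {} \<and>
           theta222_bar V E / C4_bar V E > \<kappa>"
proof -
  define m where "m = 3 + nat \<lceil>2 * \<bar>\<kappa>\<bar>\<rceil>"
  have m: "2 < m"
    by (simp add: m_def)
  have "\<kappa> < 4 * real (2 * m - 2) / 15"
    using le_of_int_ceiling[of "2 * \<bar>\<kappa>\<bar>"] abs_ge_self[of \<kappa>]
    unfolding m_def by (simp add: of_nat_diff) linarith
  also have "\<dots> \<le> theta222_bar (lat_vertices m) (lat_edge m) / C4_bar (lat_vertices m) (lat_edge m)"
    using finite_lat_vertices_in_cube[of m 0] origin_vertex_in_reps copies_at_cycle4_origin_vertex_pos[OF m]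
      lat_theta222_copies_ge_cycle4_copies m
    by (intro theta222_bar_div_C4_bar_ge) (auto simp: reps_def)
  finally have ratio: "\<kappa> < theta222_bar (lat_vertices m) (lat_edge m) / C4_bar (lat_vertices m) (lat_edge m)" .
  have "cubic_lattice (lat_vertices m) (lat_edge m)"
    using m by (intro cubic_lattice_lat) simp
  moreover have "regular_graph (lat_vertices m) (lat_edge m)"
    unfolding regular_graph_def using card_lat_neighbours by blast
  ultimately show ?thesis
    using bipartite_graph_lat lat_no_cycle6 cycle4_at_origin_vertex[OF m] ratio by blast
qed

end
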